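(* Let $Q$ be a nonzero quadratic form on $\mathbb{F}_{q_1}/\mathbb{F}_q$ with rank $r_Q\ge 1$, and let \[\mathcal{C}_Q=\{(aQ(x)+\mathrm{Tr}_{q_2/q}(by))_{(x,y)\in\mathbb{F}^\star} : (a,b)\in\mathbb{F}_q\times\mathbb{F}_{q_2}\}.\] (1) If $r_Q$ is even, then $\mathcal{C}_Q$ is a $[q^M-1,\,m_2+1]_q$ linear code whose weight distribution is: weight $0$ with frequency $1$; weight $q^{M-1}(q-1)$ with frequency $q(q^{m_2}-1)$; weight $q^{M-1}(q-1)(1-\epsilon q^{-r_Q/2})$ with frequency $q-1$. Its complete weight enumerator is \[\omega_0^{q^M-1}+q(q^{m_2}-1)\,\omega_0^{q^{M-1}-1}\prod_{\rho=1}^{q-1}\omega_\rho^{q^{M-1}}+(q-1)\,\omega_0^{q^{M-1}(1+\epsilon q^{-r_Q/2}(q-1))-1}\prod_{\rho=1}^{q-1}\omega_\rho^{q^{M-1}(1-\epsilon q^{-r_Q/2})}.\] (2) If $r_Q$ is odd, then $\mathcal{C}_Q$ is a $[q^M-1,\,m_2+1]_q$ linear code whose weight distribution is: weight $0$ with frequency $1$; weight $q^{M-1}(q-1)$ with frequency $q^{m_2+1}-1$. Its complete weight enumerator is \[\omega_0^{q^M-1}+q(q^{m_2}-1)\,\omega_0^{q^{M-1}-1}\prod_{\rho=1}^{q-1}\omega_\rho^{q^{M-1}}+\frac{q-1}{2}\,\omega_0^{q^{M-1}-1}\prod_{\rho=1}^{q-1}\omega_\rho^{q^{M-1}(1+\epsilon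 q^{\frac{1-r_Q}{2}}\eta(-\omega_\rho))}+\frac{q-1}{2}\,\omega_0^{q^{M-1}-1}\prod_{\rho=1}^{q-1}\omega_\rho^{q^{M-1}(1-\epsilon q^{\frac{1-r_Q}{2}}\eta(-\omega_\rho))}.\] Moreover, in this case $\mathcal{C}_Q$ meets the Griesmer bound (with equality) if and only if $m_1=r_Q=1$.
   Context: Let $p$ be an odd prime, $m\ge1$, $q=p^m$. Let $m_1,m_2$ be positive integers, $M=m_1+m_2$, $q_i=q^{m_i}$ ($i=1,2$), $\mathbb{F}=\mathbb{F}_{q_1}\times\mathbb{F}_{q_2}$, $\mathbb{F}^\star=\mathbb{F}\setminus\{(0,0)\}$; coordinates of codewords are indexed by $\mathbb{F}^\star$ in a fixed order. $\mathrm{Tr}_{q^s/q}$ denotes the trace from $\mathbb{F}_{q^s}$ to $\mathbb{F}_q$. $\eta$ is the quadratic character of $\mathbb{F}_q$ with $\eta(0)=0$. A quadratic form $Q$ on $\mathbb{F}_{q_1}/\mathbb{F}_q$ is a map $Q:\mathbb{F}_{q_1}\to\mathbb{F}_q$ with $Q(ax)=a^2Q(x)$ for $a\in\mathbb{F}_q$ such that $B_Q(x,y)=\frac12(Q(x+y)-Q(x)-Q(y))$ is $\mathbb{F}_q$-bilinear. Its rank is $r_Q=m_1-\dim_{\mathbb{F}_q}\{x: B_Q(x,y)=0\ \forall y\}$. In suitable $\mathbb{F}_q$-coordinates $Q=\lambda_1x_1^2+\dots+\lambda_{r_Q}x_{r_Q}^2$ with $\lambda_i\in\mathbb{F}_q^*$;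 set $\Delta_Q=\lambda_1\cdots\lambda_{r_Q}$ and $\varepsilon_Q=\eta(\Delta_Q)$. Define $\epsilon=\varepsilon_Q(-1)^{(p-1)mr_Q/4}$ if $r_Q$ is even and $\epsilon=\varepsilon_Q(-1)^{(p-1)m(r_Q+1)/4}$ if $r_Q$ is odd. Complete weight enumerator: list $\mathbb{F}_q=\{\omega_0=0,\omega_1,\dots,\omega_{q-1}\}$; for $c\in\mathbb{F}_q^n$ let $\omega[c]=\prod_j\omega_j^{k_j}$ (formal monomial) where $k_j$ is the number of coordinates of $c$ equal to $\omega_j$; the complete weight enumerator of a code $\mathcal{C}$ is $\sum_{c\in\mathcal{C}}\omega[c]$. The Griesmer bound for an $[n,k,d]_q$ code is $n\ge\sum_{i=0}^{k-1}\lceil d/q^i\rceil$; meeting it means equality. *)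

theory Defs
  imports Complex_Main "HOL-Computational_Algebra.Primes"
begin

definition eta :: "'a::field \<Rightarrow> int" where
  "eta x = (if x = 0 then 0 else if (\<exists>y. y * y = x) then 1 else -1)"

text \<open>e is an embedding of the field F_q into the extension field (making it an F_q-extension).\<close>
definition is_emb :: "('a::field \<Rightarrow> 'b::field) \<Rightarrow> bool" where
  "is_emb e \<longleftrightarrow> inj e \<and> (\<forall>x y. e (x + y) = e x + e y) \<and> (\<forall>x y. e (x * y) = e x * e y) \<and> e 1 = 1"

text \<open>Trace Tr_{q^s/q}(y) = sum_{j<s} y^(q^j), pulled back to F_q along the embedding e.\<close>
definition trace :: "('a::{finite,field} \<Rightarrow> 'b::field) \<Rightarrow> nat \<Rightarrow> 'b \<Rightarrow> 'a" where
  "trace e s y = (THE a. e a = (\<Sum>j<s. y ^ (card (UNIV :: 'a set) ^ j)))"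

definition polar :: "('b::plus \<Rightarrow> 'a::field) \<Rightarrow> 'b \<Rightarrow> 'b \<Rightarrow> 'a" where
  "polar Q x y = (Q (x + y) - Q x - Q y) / 2"

definition is_qform :: "('a::field \<Rightarrow> 'b::field) \<Rightarrow> ('b \<Rightarrow> 'a) \<Rightarrow> bool" where
  "is_qform e Q \<longleftrightarrow>
     (\<forall>a x. Q (e a * x) = a ^ 2 * Q x) \<and>
     (\<forall>x x' y. polar Q (x + x') y = polar Q x y + polar Q x' y) \<and>
     (\<forall>x y y'. polar Q x (y + y') = polar Q x y + polar Q x y') \<and>
     (\<forall>a x y. polar Q (e a * x) y = a * polar Q x y) \<and>
     (\<forall>a x y. polar Q x (e a * y) = a * polar Q x y)"

definition qf_radical :: "('b::plus \<Rightarrow> 'a::field) \<Rightarrow> 'b set" where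
  "qf_radical Q = {x. \<forall>y. polar Q x y = 0}"

text \<open>Rank r_Q = m1 - dim_{F_q} radical; the dimension d of the F_q-subspace is
  characterised by its cardinality q^d.\<close>
definition qf_rank :: "nat \<Rightarrow> ('b::plus \<Rightarrow> 'a::{finite,field}) \<Rightarrow> nat" where
  "qf_rank m1 Q = m1 - (THE d. card (qf_radical Q) = card (UNIV :: 'a set) ^ d)"

definition is_basis :: "('a::field \<Rightarrow> 'b::field) \<Rightarrow> nat \<Rightarrow> (nat \<Rightarrow> 'b) \<Rightarrow> bool" where
  "is_basis e n \<beta> \<longleftrightarrow> bij_betw (\<lambda>c. \<Sum>i<n. e (c i) * \<beta> i) {c. \<forall>i\<ge>n. c i = 0} UNIV"

definition diag_form :: "('a::field \<Rightarrow> 'b::field) \<Rightarrow> nat \<Rightarrow> ('b \<Rightarrow> 'a) \<Rightarrow> nat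
    \<Rightarrow> (nat \<Rightarrow> 'b) \<Rightarrow> (nat \<Rightarrow> 'a) \<Rightarrow> bool" where
  "diag_form e n Q r \<beta> lam \<longleftrightarrow> is_basis e n \<beta> \<and> (\<forall>i<r. lam i \<noteq> 0) \<and>
     (\<forall>c. Q (\<Sum>i<n. e (c i) * \<beta> i) = (\<Sum>i<r. lam i * (c i) ^ 2))"

definition qf_Delta :: "('a::{finite,field} \<Rightarrow> 'b::field) \<Rightarrow> nat \<Rightarrow> ('b \<Rightarrow> 'a) \<Rightarrow> 'a" where
  "qf_Delta e n Q = (let r = qf_rank n Q;
       lam = snd (SOME (\<beta>, lam). diag_form e n Q r \<beta> lam) in \<Prod>i<r. lam i)"

definition qf_varepsilon :: "('a::{finite,field} \<Rightarrow> 'b::field) \<Rightarrow> nat \<Rightarrow> ('b \<Rightarrow> 'a) \<Rightarrow> int" where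
  "qf_varepsilon e n Q = eta (qf_Delta e n Q)"

definition qf_eps :: "nat \<Rightarrow> nat \<Rightarrow> ('a::{finite,field} \<Rightarrow> 'b::field) \<Rightarrow> nat \<Rightarrow> ('b \<Rightarrow> 'a) \<Rightarrow> int" where
  "qf_eps p m e n Q = (let r = qf_rank n Q in
     qf_varepsilon e n Q * (-1) ^ (if even r then (p - 1) * m * r div 4 else (p - 1) * m * (r + 1) div 4))"

text \<open>Coordinates of codewords: F* = F_{q1} x F_{q2} minus (0,0). Codewords are functions on F*
  (set to 0 outside F*).\<close>
definition Fstar :: "('b::zero \<times> 'c::zero) set" where
  "Fstar = UNIV - {(0, 0)}"

definition codeword :: "('a::{finite,field} \<Rightarrow> 'c::field) \<Rightarrow> nat \<Rightarrow> ('b::zero \<Rightarrow> 'a) \<Rightarrow> 'a \<Rightarrow> 'c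
    \<Rightarrow> ('b \<times> 'c \<Rightarrow> 'a)" where
  "codeword e2 m2 Q a b = (\<lambda>z. if z \<in> Fstar then a * Q (fst z) + trace e2 m2 (b * snd z) else 0)"

definition code_CQ :: "('a::{finite,field} \<Rightarrow> 'c::field) \<Rightarrow> nat \<Rightarrow> ('b::zero \<Rightarrow> 'a)
    \<Rightarrow> ('b \<times> 'c \<Rightarrow> 'a) set" where
  "code_CQ e2 m2 Q = {codeword e2 m2 Q a b | a b. True}"

definition hwt :: "('b::zero \<times> 'c::zero \<Rightarrow> 'a::zero) \<Rightarrow> nat" where
  "hwt c = card {z \<in> Fstar. c z \<noteq> 0}"

definition hdist :: "('b::zero \<times> 'c::zero \<Rightarrow> 'a) \<Rightarrow> ('b \<times> 'c \<Rightarrow> 'a) \<Rightarrow> nat" where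
  "hdist c c' = card {z \<in> Fstar. c z \<noteq> c' z}"

definition min_dist :: "('b::zero \<times> 'c::zero \<Rightarrow> 'a) set \<Rightarrow> nat" where
  "min_dist C = Min {hdist c c' | c c'. c \<in> C \<and> c' \<in> C \<and> c \<noteq> c'}"

text \<open>Exponent vector of the monomial omega[c]: k(w) = number of coordinates equal to w.\<close>
definition comp_vec :: "('b::zero \<times> 'c::zero \<Rightarrow> 'a) \<Rightarrow> 'a \<Rightarrow> nat" where
  "comp_vec c = (\<lambda>w. card {z \<in> Fstar. c z = w})"

definition is_linear_code :: "('b \<times> 'c \<Rightarrow> 'a::field) set \<Rightarrow> bool" where
  "is_linear_code C \<longleftrightarrow> (\<lambda>_. 0) \<in> C \<and> (\<forall>c\<in>C. \<forall>c'\<in>C. (\<lambda>z. c z + c' z) \<in> C) \<and>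
     (\<forall>a. \<forall>c\<in>C. (\<lambda>z. a * c z) \<in> C)"

definition meets_griesmer :: "nat \<Rightarrow> nat \<Rightarrow> nat \<Rightarrow> nat \<Rightarrow> bool" where
  "meets_griesmer q n k d \<longleftrightarrow> int n = (\<Sum>i<k. \<lceil>real d / real q ^ i\<rceil>)"

end

theory Submission
  imports Defs "HOL-Computational_Algebra.Polynomial" "HOL-Library.Cardinality"
begin

(*
  The weight of the codeword with parameters (a, b) is q^M - 1 minus the number of zeros of
  a Q(x) + Tr(b y) on F*.  For b \<noteq> 0 the trace term is balanced, so every value is taken
  q^(M-1) times.  For b = 0 and a \<noteq> 0 one counts the solutions of Q(x) = w/a: after
  diagonalising Q over F_q this is q^(m1-r) times the number of points on a diagonal quadric
  lam_0 x_0^2 + ... + lam_(r-1) x_(r-1)^2 = t, which is computed by induction on r from the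
  character sums  sum_u eta(u) = 0  and  sum_u eta(u) eta(t - l u) = -eta(-l)  (t \<noteq> 0).
  For even r the answer depends only on eta((-1)^(r/2) Delta) = epsilon; for odd r it depends on
  eta(a) epsilon eta(-w), so the codewords (a, 0) split into two classes according to whether a
  is a square.  For odd r every nonzero codeword has weight q^(M-1)(q-1), and the Griesmer sum
  telescopes to q^M - q^(m1-1).
*)

section \<open>Finite fields\<close>

lemma finite_field_power_card_minus_1:
  fixes x :: "'a::{finite,field}"
  assumes "x \<noteq> 0"
  shows "x ^ (CARD('a) - 1) = 1"
proof -
  let ?U = "UNIV - {0::'a}"
  have "(\<Prod>y\<in>?U. x * y) = (\<Prod>y\<in>?U. y)"
    by (rule prod.reindex_bij_witness[of _ "\<lambda>y. y / x" "\<lambda>y. x * y"]) (use assms in auto)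
  then have "x ^ card ?U * \<Prod>?U = 1 * \<Prod>?U"
    by (simp add: prod.distrib)
  moreover have "\<Prod>?U \<noteq> 0"
    by simp
  ultimately show ?thesis
    by (simp add: card_Diff_singleton)
qed

lemma finite_field_power_card [simp]:
  fixes x :: "'a::{finite,field}"
  shows "x ^ CARD('a) = x"
proof (cases "x = 0")
  case False
  have "CARD('a) = Suc (CARD('a) - 1)"
    using finite_UNIV_card_ge_0[where 'a='a] by simp
  then show ?thesis
    using finite_field_power_card_minus_1[OF False] by (metis power_Suc mult_1_right)
qed (simp add: finite_UNIV_card_ge_0)

lemma finite_field_power_card_power [simp]:
  fixes x :: "'a::{finite,field}"
  shows "x ^ (CARD('a) ^ n) = x"
  by (induction n) (simp_all add: power_mult)

lemma of_nat_card_finite_field [simp]: "of_nat CARD('a) = (0::'a::{finite,field})"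
proof -
  have "(\<Sum>x\<in>(UNIV::'a set). x + 1) = (\<Sum>x\<in>UNIV. x)"
    by (rule sum.reindex_bij_witness[of _ "\<lambda>y. y - 1" "\<lambda>y. y + 1"]) auto
  then show ?thesis
    by (simp add: sum.distrib)
qed

lemma prime_CHAR_finite_field: "prime CHAR('a::{finite,field})"
  by (rule prime_CHAR_semidom) (simp add: finite_imp_CHAR_pos)

lemma CHAR_dvd_card_finite_field: "CHAR('a::{finite,field}) dvd CARD('a)"
  by (simp flip: of_nat_eq_0_iff_char_dvd)

lemma CHAR_finite_field:
  assumes "CARD('a::{finite,field}) = p ^ m" "prime p"
  shows "CHAR('a) = p"
  using CHAR_dvd_card_finite_field[where 'a='a] prime_CHAR_finite_field[where 'a='a] assms
  by (metis prime_dvd_power primes_dvd_imp_eq)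

lemma two_neq_zero_finite_field:
  assumes "odd CARD('a::{finite,field})"
  shows "(2::'a) \<noteq> 0"
proof
  assume "(2::'a) = 0"
  then have "CHAR('a) dvd 2"
    by (metis of_nat_eq_0_iff_char_dvd of_nat_numeral)
  then have "CHAR('a) = 2"
    using prime_CHAR_finite_field[where 'a='a] by (simp add: primes_dvd_imp_eq)
  then show False
    using CHAR_dvd_card_finite_field[where 'a='a] assms by simp
qed

lemma card_finite_field_ge_2: "CARD('a::{finite,field}) \<ge> 2"
proof -
  have "card {0, 1::'a} \<le> CARD('a)"
    by (rule card_mono) auto
  then show ?thesis
    by simp
qed

lemma card_finite_field_ge_3:
  assumes "odd CARD('a::{finite,field})"
  shows "CARD('a) \<ge> 3"
  using card_finite_field_ge_2[where 'a='a] assms by presburger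

section \<open>The quadratic character\<close>

lemma eta_cases: "eta x \<in> {-1, 0, 1}"
  by (simp add: eta_def)

lemma eta_0 [simp]: "eta 0 = 0"
  by (simp add: eta_def)

lemma eta_eq_0_iff [simp]: "eta x = 0 \<longleftrightarrow> x = 0"
  by (simp add: eta_def)

lemma eta_square [simp]: "x \<noteq> 0 \<Longrightarrow> eta (x * x) = 1"
  by (auto simp: eta_def)

lemma eta_1 [simp]: "eta 1 = 1"
  using eta_square[of 1] by simp

lemma eta_times_self: "x \<noteq> 0 \<Longrightarrow> eta x * eta x = 1"
  by (auto simp: eta_def)

lemma card_square_roots:
  assumes "odd CARD('a::{finite,field})"
  shows "int (card {x::'a. x * x = u}) = 1 + eta u"
proof (cases "u = 0")
  case True
  then have "{x::'a. x * x = u} = {0}"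
    by auto
  then show ?thesis
    using True by simp
next
  case u: False
  show ?thesis
  proof (cases "\<exists>y. y * y = u")
    case True
    then obtain y where y: "y * y = u"
      by blast
    with u have "y \<noteq> 0"
      by auto
    have "x * x = u \<longleftrightarrow> x = y \<or> x = -y" for x
    proof -
      have "x * x - u = (x - y) * (x + y)"
        using y by (simp add: algebra_simps)
      then show ?thesis
        by (metis add_eq_0_iff2 eq_iff_diff_eq_0 mult_eq_0_iff)
    qed
    then have "{x. x * x = u} = {y, -y}"
      by blast
    moreover have "y \<noteq> -y"
    proof
      assume "y = -y"
      then have "2 * y = 0"
        by (metis add_eq_0_iff2 mult_2)
      then show False
        using \<open>y \<noteq> 0\<close> two_neq_zero_finite_field[OF assms] by simp
    qed
    ultimately show ?thesis
      using True u by (simp add: eta_def)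
  next
    case False
    then show ?thesis
      using u by (simp add: eta_def)
  qed
qed

lemma sum_over_squares:
  assumes "odd CARD('a::{finite,field})"
  shows "(\<Sum>x\<in>(UNIV::'a set). f (x * x)) = (\<Sum>u\<in>UNIV. (1 + eta u) * (f u :: int))"
proof -
  have "(\<Sum>x\<in>(UNIV::'a set). f (x * x)) = (\<Sum>u\<in>UNIV. \<Sum>x\<in>{x. x \<in> UNIV \<and> x * x = u}. f (x * x))"
    by (rule sum.group[symmetric]) auto
  also have "\<dots> = (\<Sum>u\<in>UNIV. int (card {x::'a. x * x = u}) * f u)"
    by simp
  finally show ?thesis
    by (simp add: card_square_roots[OF assms])
qed

lemma sum_eta:
  assumes "odd CARD('a::{finite,field})"
  shows "(\<Sum>u\<in>(UNIV::'a set). eta u) = 0"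
  using sum_over_squares[OF assms, of "\<lambda>_. 1"] by (simp add: sum.distrib)

lemma sum_eta_affine:
  fixes a b :: "'a::{finite,field}"
  assumes "odd CARD('a)" "b \<noteq> 0"
  shows "(\<Sum>u\<in>UNIV. eta (a + b * u)) = 0"
proof -
  have "(\<Sum>u\<in>UNIV. eta (a + b * u)) = (\<Sum>v\<in>(UNIV::'a set). eta v)"
    by (rule sum.reindex_bij_witness[of _ "\<lambda>v. (v - a) / b" "\<lambda>u. a + b * u"]) (use assms(2) in auto)
  then show ?thesis
    using sum_eta[OF assms(1)] by simp
qed

lemma card_eta_eq_1:
  assumes "odd CARD('a::{finite,field})"
  shows "card {u::'a. eta u = 1} = (CARD('a) - 1) div 2"
    and "card {u::'a. eta u = -1} = (CARD('a) - 1) div 2"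
proof -
  let ?S = "{u::'a. eta u = 1}" and ?N = "{u::'a. eta u = -1}"
  have "(\<Sum>u\<in>(UNIV::'a set). eta u) = (\<Sum>u\<in>UNIV. of_bool (u \<in> ?S) - of_bool (u \<in> ?N))"
  proof (rule sum.cong)
    show "eta u = of_bool (u \<in> ?S) - of_bool (u \<in> ?N)" for u
      using eta_cases[of u] by (elim insertE) simp_all
  qed simp
  also have "\<dots> = int (card ?S) - int (card ?N)"
    by (simp add: sum_subtractf)
  finally have "card ?S = card ?N"
    using sum_eta[OF assms] by simp
  moreover have "card ?S + card ?N = CARD('a) - 1"
  proof -
    have "?S \<union> ?N = UNIV - {0}"
      unfolding eta_def by auto
    moreover have "card (?S \<union> ?N) = card ?S + card ?N"
      by (rule card_Un_disjoint) auto
    ultimately show ?thesis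
      by (simp add: card_Diff_singleton)
  qed
  ultimately show "card ?S = (CARD('a) - 1) div 2" "card ?N = (CARD('a) - 1) div 2"
    by simp_all
qed

lemma power_half_card_eq_1_iff:
  fixes u :: "'a::{finite,field}"
  assumes odd: "odd CARD('a)"
  shows "u ^ ((CARD('a) - 1) div 2) = 1 \<longleftrightarrow> eta u = 1"
proof -
  define h where "h = (CARD('a) - 1) div 2"
  have h: "2 * h = CARD('a) - 1" "h \<ge> 1"
    using odd card_finite_field_ge_3[OF odd] by (auto simp: h_def)
  define P :: "'a poly" where "P = monom 1 h - 1"
  have "coeff P h = 1"
    using h by (simp add: P_def)
  then have "P \<noteq> 0"
    by auto
  moreover have "degree P \<le> h"
    unfolding P_def by (rule degree_diff_le) (simp_all add: degree_monom_le)
  ultimately have roots: "card {x. poly P x = 0} \<le> h"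
    using card_poly_roots_bound le_trans by blast
  have poly_P: "poly P x = 0 \<longleftrightarrow> x ^ h = 1" for x
    by (simp add: P_def poly_monom)
  have "v ^ h = 1" if "eta v = 1" for v :: 'a
  proof -
    obtain y where "y * y = v" "y \<noteq> 0"
      using \<open>eta v = 1\<close> by (auto simp: eta_def split: if_splits)
    then show ?thesis
      using finite_field_power_card_minus_1 h(1) by (metis power2_eq_square power_mult)
  qed
  then have squares_sub: "{v. eta v = 1} \<subseteq> {x. poly P x = 0}"
    using poly_P by blast
  \<comment> \<open>The \<open>h\<close> nonzero squares fill up the at most \<open>h\<close> roots of \<open>X\<^sup>h - 1\<close>.\<close>
  have "{v. eta v = 1} = {x. poly P x = 0}"
  proof (rule card_subset_eq[OF finite squares_sub], rule le_antisym)
    show "card {v::'a. eta v = 1} \<le> card {x. poly P x = 0}"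
      by (rule card_mono[OF finite squares_sub])
    show "card {x. poly P x = 0} \<le> card {v::'a. eta v = 1}"
      using roots card_eta_eq_1(1)[OF odd] by (simp add: h_def)
  qed
  then show ?thesis
    using poly_P by (auto simp: h_def)
qed

lemma euler_criterion:
  fixes u :: "'a::{finite,field}"
  assumes odd: "odd CARD('a)"
  shows "of_int (eta u) = u ^ ((CARD('a) - 1) div 2)"
proof -
  define h where "h = (CARD('a) - 1) div 2"
  have h: "2 * h = CARD('a) - 1" "h \<ge> 1"
    using odd card_finite_field_ge_3[OF odd] by (auto simp: h_def)
  consider "u = 0" | "eta u = 1" | "eta u = -1"
    using eta_cases[of u] eta_eq_0_iff by blast
  then show ?thesis
  proof cases
    case 1
    then show ?thesis
      using h by (simp add: h_def)
  next
    case 2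
    then show ?thesis
      using power_half_card_eq_1_iff[OF odd] by simp
  next
    case 3
    then have "u \<noteq> 0"
      by auto
    then have "(u ^ h - 1) * (u ^ h + 1) = 0"
      using finite_field_power_card_minus_1 h(1) by (simp add: algebra_simps flip: power_add mult_2)
    moreover have "u ^ h \<noteq> 1"
      using 3 power_half_card_eq_1_iff[OF odd, of u] by (simp add: h_def)
    ultimately have "u ^ h = -1"
      by (simp add: eq_neg_iff_add_eq_0)
    then show ?thesis
      using 3 by (simp add: h_def)
  qed
qed

lemma of_int_sign_eq_iff:
  assumes "(2::'a::ring_1) \<noteq> 0" "a \<in> {-1, 0, 1}" "b \<in> {-1, 0, 1}"
  shows "(of_int a :: 'a) = of_int b \<longleftrightarrow> a = b"
proof -
  have "(1::'a) \<noteq> -1"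
    using assms(1) by (metis add_eq_0_iff2 one_add_one)
  then show ?thesis
    using assms by auto
qed

lemma eta_mult:
  fixes x y :: "'a::{finite,field}"
  assumes "odd CARD('a)"
  shows "eta (x * y) = eta x * eta y"
proof -
  have "(of_int (eta (x * y)) :: 'a) = of_int (eta x * eta y)"
    by (simp add: euler_criterion[OF assms] power_mult_distrib)
  moreover have "eta x * eta y \<in> {-1, 0, 1}"
    using eta_cases[of x] eta_cases[of y] by auto
  ultimately show ?thesis
    using of_int_sign_eq_iff two_neq_zero_finite_field[OF assms] eta_cases by blast
qed

lemma eta_minus_1:
  assumes "odd CARD('a::{finite,field})"
  shows "eta (-1 :: 'a) = (-1) ^ ((CARD('a) - 1) div 2)"
proof -
  have "(of_int (eta (-1::'a)) :: 'a) = of_int ((-1) ^ ((CARD('a) - 1) div 2))"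
    by (simp add: euler_criterion[OF assms])
  moreover have "(-1::int) ^ ((CARD('a) - 1) div 2) \<in> {-1, 0, 1}"
    by (simp add: minus_one_power_iff)
  ultimately show ?thesis
    using of_int_sign_eq_iff two_neq_zero_finite_field[OF assms] eta_cases by blast
qed

lemma eta_power:
  fixes x :: "'a::{finite,field}"
  assumes "odd CARD('a)"
  shows "eta (x ^ n) = eta x ^ n"
  by (induction n) (simp_all add: eta_mult[OF assms])

lemma eta_divide:
  fixes x y :: "'a::{finite,field}"
  assumes "odd CARD('a)"
  shows "eta (x / y) = eta x * eta y"
proof (cases "y = 0")
  case False
  have "eta x * eta y = eta (x / y * (y * y))"
    using False by (simp add: eta_mult[OF assms, symmetric] field_simps)
  also have "\<dots> = eta (x / y) * eta (y * y)"
    by (rule eta_mult[OF assms])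
  finally show ?thesis
    using False by simp
qed simp

lemma jacobi_sum_eta:
  fixes l t :: "'a::{finite,field}"
  assumes odd: "odd CARD('a)" and "l \<noteq> 0"
  shows "(\<Sum>u\<in>UNIV. eta u * eta (t - l * u)) = (if t = 0 then int CARD('a) - 1 else -1) * eta (- l)"
proof -
  have "eta u * eta (t - l * u) = eta (t / u - l)" if "u \<noteq> 0" for u
  proof -
    have "u * (t - l * u) = (u * u) * (t / u - l)"
      using that by (simp add: field_simps)
    then have "eta u * eta (t - l * u) = eta (u * u) * eta (t / u - l)"
      by (simp only: eta_mult[OF odd, symmetric])
    then show ?thesis
      using that by simp
  qed
  then have sum_eq: "(\<Sum>u\<in>UNIV. eta u * eta (t - l * u)) = (\<Sum>u\<in>UNIV - {0}. eta (t / u - l))"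
    by (intro sum.mono_neutral_cong_right) auto
  show ?thesis
  proof (cases "t = 0")
    case True
    then show ?thesis
      unfolding sum_eq using finite_UNIV_card_ge_0[where 'a='a] by (simp add: card_Diff_singleton)
  next
    case False
    have "(\<Sum>u\<in>UNIV - {0}. eta (t / u - l)) = (\<Sum>v\<in>UNIV - {0}. eta (v - l))"
      by (rule sum.reindex_bij_witness[of _ "\<lambda>v. t / v" "\<lambda>u. t / u"]) (use False in auto)
    also have "\<dots> = (\<Sum>v\<in>UNIV. eta (- l + 1 * v)) - eta (- l)"
      by (simp add: sum_diff1)
    also have "(\<Sum>v\<in>UNIV. eta (- l + 1 * v)) = 0"
      by (rule sum_eta_affine[OF odd]) simp
    finally show ?thesis
      unfolding sum_eq using False by simp
  qed
qed

section \<open>Points on diagonal quadrics\<close>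

definition coord_space :: "nat \<Rightarrow> (nat \<Rightarrow> 'a::zero) set" where
  "coord_space n = {c. \<forall>i\<ge>n. c i = 0}"

lemma coord_space_0: "coord_space 0 = {\<lambda>_. 0}"
  by (auto simp: coord_space_def)

lemma bij_betw_coord_space_Suc:
  "bij_betw (\<lambda>(x, c). c(n := x)) (UNIV \<times> coord_space n) (coord_space (Suc n))"
  by (rule bij_betw_byWitness[where f' = "\<lambda>c. (c n, c(n := 0))"]) (auto simp: coord_space_def)

lemma finite_coord_space [simp]: "finite (coord_space n :: (nat \<Rightarrow> 'a::{finite,zero}) set)"
proof (induction n)
  case (Suc n)
  then show ?case
    using bij_betw_imp_surj_on[OF bij_betw_coord_space_Suc[of n]] by (metis finite_SigmaI finite finite_imageI)
qed (simp add: coord_space_0)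

lemma card_coord_space_Suc_filter:
  fixes P :: "(nat \<Rightarrow> 'a::{finite,zero}) \<Rightarrow> bool"
  shows "card {c \<in> coord_space (Suc n). P c} = (\<Sum>x\<in>UNIV. card {c \<in> coord_space n. P (c(n := x))})"
proof -
  have "card {c \<in> coord_space (Suc n). P c} = card {z \<in> UNIV \<times> coord_space n. P ((snd z)(n := fst z))}"
    by (rule bij_betw_same_card[symmetric], rule bij_betw_Collect[OF bij_betw_coord_space_Suc]) auto
  also have "{z \<in> UNIV \<times> coord_space n. P ((snd z)(n := fst z))} = (SIGMA x:UNIV. {c \<in> coord_space n. P (c(n := x))})"
    by auto
  finally show ?thesis
    by simp
qed

lemma card_coord_space: "card (coord_space n :: (nat \<Rightarrow> 'a::{finite,zero}) set) = CARD('a) ^ n"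
  using card_coord_space_Suc_filter[where P = "\<lambda>_. True" and 'a = 'a] by (induction n) (simp_all add: coord_space_0)

lemma card_coord_space_filter_prefix:
  fixes P :: "(nat \<Rightarrow> 'a::{finite,zero}) \<Rightarrow> bool"
  assumes "r \<le> n" and "\<And>c d. (\<forall>i<r. c i = d i) \<Longrightarrow> P c = P d"
  shows "card {c \<in> coord_space n. P c} = CARD('a) ^ (n - r) * card {c \<in> coord_space r. P c}"
  using assms(1)
proof (induction n rule: dec_induct)
  case (step n)
  have "P (c(n := x)) = P c" for c x
    by (rule assms(2)) (use step(1) in auto)
  then show ?case
    using step.IH step(1) by (simp add: card_coord_space_Suc_filter Suc_diff_le)
qed simp

definition diag_count :: "nat \<Rightarrow> (nat \<Rightarrow> 'a::{finite,field}) \<Rightarrow> 'a \<Rightarrow> nat" where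
  "diag_count r lam t = card {c \<in> coord_space r. (\<Sum>i<r. lam i * (c i)\<^sup>2) = t}"

lemma diag_count_0: "diag_count 0 lam t = of_bool (t = 0)"
  by (simp add: diag_count_def coord_space_0)

lemma diag_count_Suc:
  "diag_count (Suc r) lam t = (\<Sum>x\<in>UNIV. diag_count r lam (t - lam r * x\<^sup>2))"
proof -
  have "(\<Sum>i<Suc r. lam i * ((c(r := x)) i)\<^sup>2) = t \<longleftrightarrow> (\<Sum>i<r. lam i * (c i)\<^sup>2) = t - lam r * x\<^sup>2"
    for c :: "nat \<Rightarrow> 'a" and x
    by (auto simp: algebra_simps)
  then show ?thesis
    unfolding diag_count_def card_coord_space_Suc_filter by presburger
qed

lemma card_scaled_square_eq:
  fixes l t :: "'a::{finite,field}"
  assumes "odd CARD('a)" "l \<noteq> 0"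
  shows "int (card {x. l * x\<^sup>2 = t}) = 1 + eta (t * l)"
proof -
  have "{x. l * x\<^sup>2 = t} = {x. x * x = t / l}"
    using assms(2) by (auto simp: field_simps power2_eq_square)
  then show ?thesis
    using card_square_roots[OF assms(1), of "t / l"] by (simp add: eta_divide[OF assms(1)] eta_mult[OF assms(1)])
qed

lemma diag_count_Suc_of_even:
  fixes lam :: "nat \<Rightarrow> 'a::{finite,field}" and r :: nat
  defines "q \<equiv> int CARD('a)" and "D \<equiv> \<Prod>i<r. lam i"
  assumes odd: "odd CARD('a)" and r: "even r" "r \<ge> 2" and l: "lam r \<noteq> 0"
    and IH: "\<And>s. int (diag_count r lam s) =
      q ^ (r - 1) + (if s = 0 then q - 1 else -1) * q ^ (r div 2 - 1) * eta ((-1) ^ (r div 2) * D)"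
  shows "int (diag_count (Suc r) lam t) = q ^ r + q ^ (r div 2) * eta ((-1) ^ (r div 2) * t * (D * lam r))"
proof -
  define C where "C = q ^ (r div 2 - 1) * eta ((-1) ^ (r div 2) * D)"
  have "int (diag_count (Suc r) lam t) = (\<Sum>x\<in>UNIV. (q ^ (r - 1) - C) + q * C * of_bool (lam r * x\<^sup>2 = t))"
    unfolding diag_count_Suc of_nat_sum IH C_def by (intro sum.cong) (auto simp: algebra_simps)
  also have "\<dots> = (\<Sum>x\<in>(UNIV::'a set). q ^ (r - 1) - C) + q * C * (\<Sum>x\<in>UNIV. of_bool (lam r * x\<^sup>2 = t))"
    by (simp add: sum.distrib sum_distrib_left)
  also have "\<dots> = q * (q ^ (r - 1) - C) + q * C * int (card {x. lam r * x\<^sup>2 = t})"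
    by (simp add: q_def)
  also have "\<dots> = q ^ r + q * C * eta (t * lam r)"
    using r by (simp add: card_scaled_square_eq[OF odd l] algebra_simps flip: power_Suc)
  also have "q * C * eta (t * lam r) = q ^ (r div 2) * eta ((-1) ^ (r div 2) * t * (D * lam r))"
    using r by (simp add: C_def eta_mult[OF odd] mult_ac flip: power_Suc)
  finally show ?thesis .
qed

lemma diag_count_Suc_of_odd:
  fixes lam :: "nat \<Rightarrow> 'a::{finite,field}" and r :: nat
  defines "q \<equiv> int CARD('a)" and "D \<equiv> \<Prod>i<r. lam i"
  assumes odd: "odd CARD('a)" and r: "odd r" and l: "lam r \<noteq> 0"
    and IH: "\<And>s. int (diag_count r lam s) =
      q ^ (r - 1) + q ^ ((r - 1) div 2) * eta ((-1) ^ ((r - 1) div 2) * s * D)"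
  shows "int (diag_count (Suc r) lam t) =
    q ^ r + (if t = 0 then q - 1 else -1) * q ^ ((r - 1) div 2) * eta ((-1) ^ (Suc r div 2) * (D * lam r))"
proof -
  define c where "c = (-1) ^ ((r - 1) div 2) * D"
  have "(\<Sum>x\<in>UNIV. eta (t - lam r * x\<^sup>2)) = (\<Sum>u\<in>UNIV. (1 + eta u) * eta (t - lam r * u))"
    using sum_over_squares[OF odd, of "\<lambda>u. eta (t - lam r * u)"] by (simp add: power2_eq_square)
  also have "\<dots> = (\<Sum>u\<in>UNIV. eta (t + (- lam r) * u)) + (\<Sum>u\<in>UNIV. eta u * eta (t - lam r * u))"
    by (simp add: algebra_simps sum.distrib)
  also have "\<dots> = (if t = 0 then q - 1 else -1) * eta (- lam r)"
    using sum_eta_affine[OF odd, of "- lam r" t] jacobi_sum_eta[OF odd l, of t] l by (simp add: q_def)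
  finally have eta_sum: "(\<Sum>x\<in>UNIV. eta (t - lam r * x\<^sup>2)) = (if t = 0 then q - 1 else -1) * eta (- lam r)" .
  have "int (diag_count (Suc r) lam t) = (\<Sum>x\<in>UNIV. q ^ (r - 1) + q ^ ((r - 1) div 2) * eta c * eta (t - lam r * x\<^sup>2))"
    unfolding diag_count_Suc of_nat_sum IH c_def by (intro sum.cong) (simp_all add: eta_mult[OF odd] mult_ac)
  also have "\<dots> = q * q ^ (r - 1) + q ^ ((r - 1) div 2) * eta c * (\<Sum>x\<in>UNIV. eta (t - lam r * x\<^sup>2))"
    by (simp add: sum.distrib q_def flip: sum_distrib_left)
  also have "\<dots> = q ^ r + (if t = 0 then q - 1 else -1) * q ^ ((r - 1) div 2) * (eta c * eta (- lam r))"
    using r by (simp add: eta_sum mult_ac flip: power_Suc)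
  also have "eta c * eta (- lam r) = eta ((-1) ^ (Suc r div 2) * (D * lam r))"
  proof -
    have "Suc r div 2 = Suc ((r - 1) div 2)"
      using r by presburger
    then have "(-1) ^ (Suc r div 2) * (D * lam r) = c * (- lam r)"
      by (simp add: c_def)
    then show ?thesis
      by (simp only: eta_mult[OF odd])
  qed
  finally show ?thesis .
qed

text \<open>The classical point counts of Lidl and Niederreiter, Finite Fields, Theorems 6.26 and 6.27.\<close>

lemma diag_count_closed_form:
  fixes lam :: "nat \<Rightarrow> 'a::{finite,field}"
  defines "q \<equiv> int CARD('a)"
  assumes odd: "odd CARD('a)" and "\<forall>i<r. lam i \<noteq> 0" and "r \<ge> 1"
  shows "int (diag_count r lam t) =
    (if even r
     then q ^ (r - 1) + (if t = 0 then q - 1 else -1) * q ^ (r div 2 - 1) * eta ((-1) ^ (r div 2) * (\<Prod>i<r. lam i))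
     else q ^ (r - 1) + q ^ ((r - 1) div 2) * eta ((-1) ^ ((r - 1) div 2) * t * (\<Prod>i<r. lam i)))"
  unfolding q_def using assms(4,3)
proof (induction r arbitrary: t rule: nat_induct_at_least)
  case base
  have "{x. t - lam 0 * x\<^sup>2 = 0} = {x. lam 0 * x\<^sup>2 = t}"
    by auto
  then have "int (diag_count 1 lam t) = int (card {x. lam 0 * x\<^sup>2 = t})"
    using diag_count_Suc[of 0 lam t] by (simp add: diag_count_0)
  then show ?case
    using base card_scaled_square_eq[OF odd, of "lam 0" t] by (simp add: mult.commute)
next
  case (Suc r)
  then have l: "lam r \<noteq> 0"
    by simp
  show ?case
  proof (cases "even r")
    case True
    moreover have "r \<ge> 2"
      using True Suc(1) by presburger
    moreover have "Suc r - 1 = r" "(Suc r - 1) div 2 = r div 2"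
      by simp_all
    ultimately show ?thesis
      using diag_count_Suc_of_even[where lam = lam, OF odd True \<open>r \<ge> 2\<close> l, of t] Suc
      by (simp add: mult_ac)
  next
    case False
    moreover have "Suc r div 2 - 1 = (r - 1) div 2"
      using False by presburger
    ultimately show ?thesis
      using diag_count_Suc_of_odd[where lam = lam, OF odd False l, of t] Suc
      by (simp add: mult_ac)
  qed
qed

section \<open>Quadratic forms over a field extension\<close>

locale field_embedding =
  fixes e :: "'a::{finite,field} \<Rightarrow> 'b::field"
  assumes is_emb: "is_emb e"
begin

lemma emb_add [simp]: "e (x + y) = e x + e y"
  using is_emb by (simp add: is_emb_def)

lemma emb_mult [simp]: "e (x * y) = e x * e y"
  using is_emb by (simp add: is_emb_def)

lemma emb_1 [simp]: "e 1 = 1"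
  using is_emb by (simp add: is_emb_def)

lemma emb_eq_iff [simp]: "e x = e y \<longleftrightarrow> x = y"
  using is_emb by (auto simp: is_emb_def inj_def)

lemma emb_0 [simp]: "e 0 = 0"
  using emb_add[of 0 0] by (metis add.right_neutral add_left_cancel)

lemma emb_eq_0_iff [simp]: "e x = 0 \<longleftrightarrow> x = 0"
  using emb_eq_iff[of x 0] by simp

lemma emb_minus [simp]: "e (- x) = - e x"
  using emb_add[of "- x" x] by (simp add: eq_neg_iff_add_eq_0)

lemma emb_diff [simp]: "e (x - y) = e x - e y"
  using emb_add[of x "- y"] by simp

lemma emb_of_nat [simp]: "e (of_nat n) = of_nat n"
  by (induction n) simp_all

lemma emb_numeral [simp]: "e (numeral k) = numeral k"
  using emb_of_nat[of "numeral k"] by simp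

lemma emb_power [simp]: "e (x ^ n) = e x ^ n"
  by (induction n) simp_all

end

definition lin_comb :: "('a::field \<Rightarrow> 'b::field) \<Rightarrow> nat \<Rightarrow> (nat \<Rightarrow> 'b) \<Rightarrow> (nat \<Rightarrow> 'a) \<Rightarrow> 'b" where
  "lin_comb e n \<beta> c = (\<Sum>i<n. e (c i) * \<beta> i)"

lemma is_basis_iff_bij_betw_lin_comb: "is_basis e n \<beta> \<longleftrightarrow> bij_betw (lin_comb e n \<beta>) (coord_space n) UNIV"
  unfolding is_basis_def lin_comb_def[abs_def] coord_space_def ..

lemma lin_comb_cong: "(\<And>i. i < n \<Longrightarrow> c i = d i) \<Longrightarrow> lin_comb e n \<beta> c = lin_comb e n \<beta> d"
  by (simp add: lin_comb_def)

lemma lin_comb_Suc: "lin_comb e (Suc n) \<beta> c = lin_comb e n \<beta> c + e (c n) * \<beta> n"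
  by (simp add: lin_comb_def)

lemma lin_comb_Suc_shift:
  "lin_comb e (Suc n) \<beta> c = e (c 0) * \<beta> 0 + lin_comb e n (\<lambda>i. \<beta> (Suc i)) (\<lambda>i. c (Suc i))"
  unfolding lin_comb_def by (rule sum.lessThan_Suc_shift)

lemma lin_comb_fun_upd_self: "lin_comb e n (\<beta>(n := w)) c = lin_comb e n \<beta> c"
  by (simp add: lin_comb_def)

definition emb_subspace :: "('a::field \<Rightarrow> 'b::field) \<Rightarrow> 'b set \<Rightarrow> bool" where
  "emb_subspace e W \<longleftrightarrow> 0 \<in> W \<and> (\<forall>x\<in>W. \<forall>y\<in>W. x + y \<in> W) \<and> (\<forall>a. \<forall>x\<in>W. e a * x \<in> W)"

lemma bij_betw_coord_space_Suc_shift: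
  "bij_betw (\<lambda>c. (c 0, \<lambda>i. c (Suc i))) (coord_space (Suc k)) (UNIV \<times> coord_space k)"
  by (rule bij_betw_byWitness[where f' = "\<lambda>(s, d). case_nat s d"])
    (auto simp: coord_space_def fun_eq_iff split: nat.split)

context field_embedding
begin

lemma lin_comb_add: "lin_comb e n \<beta> (\<lambda>i. c i + d i) = lin_comb e n \<beta> c + lin_comb e n \<beta> d"
  by (simp add: lin_comb_def distrib_right sum.distrib)

lemma lin_comb_smult: "lin_comb e n \<beta> (\<lambda>i. a * c i) = e a * lin_comb e n \<beta> c"
  by (simp add: lin_comb_def sum_distrib_left mult_ac)

lemma lin_comb_diff: "lin_comb e n \<beta> (\<lambda>i. c i - d i) = lin_comb e n \<beta> c - lin_comb e n \<beta> d"
  by (simp add: lin_comb_def left_diff_distrib sum_subtractf)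

lemma emb_subspace_sum:
  assumes "emb_subspace e W" "\<And>i. i \<in> A \<Longrightarrow> f i \<in> W"
  shows "(\<Sum>i\<in>A. f i) \<in> W"
  using assms(2) by (induction A rule: infinite_finite_induct) (use assms(1) in \<open>auto simp: emb_subspace_def\<close>)

lemma emb_subspace_lin_comb:
  assumes "emb_subspace e W" "\<And>i. \<beta> i \<in> W"
  shows "lin_comb e n \<beta> c \<in> W"
  unfolding lin_comb_def using assms by (intro emb_subspace_sum) (auto simp: emb_subspace_def)

lemma emb_subspace_diff:
  assumes "emb_subspace e W" "x \<in> W" "y \<in> W"
  shows "x - y \<in> W"
proof -
  have "e (-1) * y \<in> W"
    using assms unfolding emb_subspace_def by blast
  then have "- y \<in> W"
    by simp
  then show ?thesis
    using assms unfolding emb_subspace_def diff_conv_add_uminus by blast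
qed

lemma inj_on_lin_comb_extend:
  assumes inj: "inj_on (lin_comb e j \<beta>) (coord_space j)" and w: "w \<notin> lin_comb e j \<beta> ` coord_space j"
  shows "inj_on (lin_comb e (Suc j) (\<beta>(j := w))) (coord_space (Suc j))"
proof (rule inj_onI)
  fix c d :: "nat \<Rightarrow> 'a"
  assume c: "c \<in> coord_space (Suc j)" and d: "d \<in> coord_space (Suc j)"
    and eq: "lin_comb e (Suc j) (\<beta>(j := w)) c = lin_comb e (Suc j) (\<beta>(j := w)) d"
  then have diff: "lin_comb e j \<beta> c - lin_comb e j \<beta> d = e (d j - c j) * w"
    by (simp add: lin_comb_Suc lin_comb_fun_upd_self algebra_simps)
  have cj: "c j = d j"
  proof (rule ccontr)
    assume "c j \<noteq> d j"
    define s where "s = d j - c j"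
    have "s \<noteq> 0"
      using \<open>c j \<noteq> d j\<close> by (simp add: s_def)
    define f where "f = (\<lambda>i. if i < j then (c i - d i) / s else 0)"
    have "lin_comb e j \<beta> f = lin_comb e j \<beta> (\<lambda>i. inverse s * (c i - d i))"
      by (rule lin_comb_cong) (simp add: f_def divide_inverse mult.commute)
    also have "\<dots> = e (inverse s) * e s * w"
      by (simp add: lin_comb_smult lin_comb_diff diff s_def mult.assoc)
    also have "\<dots> = w"
      using \<open>s \<noteq> 0\<close> by (simp flip: emb_mult)
    finally have "lin_comb e j \<beta> f = w" .
    moreover have "f \<in> coord_space j"
      by (simp add: coord_space_def f_def)
    ultimately show False
      using w by (metis image_eqI)
  qed
  have "c(j := 0) = d(j := 0)"
  proof (rule inj_onD[OF inj])
    show "lin_comb e j \<beta> (c(j := 0)) = lin_comb e j \<beta> (d(j := 0))"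
      using diff cj by (simp add: lin_comb_cong[of j "c(j := 0)" c] lin_comb_cong[of j "d(j := 0)" d])
    show "c(j := 0) \<in> coord_space j" "d(j := 0) \<in> coord_space j"
      using c d by (auto simp: coord_space_def)
  qed
  then show "c = d"
    using cj by (metis fun_upd_triv fun_upd_upd)
qed

lemma emb_subspace_independent_exists:
  assumes W: "emb_subspace e W" and card_W: "card W = CARD('a) ^ k" and "j \<le> k"
  shows "\<exists>\<beta>. (\<forall>i. \<beta> i \<in> W) \<and> inj_on (lin_comb e j \<beta>) (coord_space j)"
  using assms(3)
proof (induction j)
  case 0
  then show ?case
    using W by (intro exI[of _ "\<lambda>_. 0"]) (simp add: emb_subspace_def coord_space_0)
next
  case (Suc j)
  then obtain \<beta> where \<beta>: "\<forall>i. \<beta> i \<in> W" and inj: "inj_on (lin_comb e j \<beta>) (coord_space j)"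
    by auto
  have "card (lin_comb e j \<beta> ` coord_space j) = CARD('a) ^ j"
    using inj by (simp add: card_image card_coord_space)
  also have "\<dots> < card W"
    using Suc.prems card_W card_finite_field_ge_2[where 'a='a] by (simp add: power_strict_increasing)
  finally have "\<not> W \<subseteq> lin_comb e j \<beta> ` coord_space j"
    using card_mono[of "lin_comb e j \<beta> ` coord_space j" W] by auto
  then obtain w where w: "w \<in> W" "w \<notin> lin_comb e j \<beta> ` coord_space j"
    by blast
  have "\<forall>i. (\<beta>(j := w)) i \<in> W"
    using \<beta> w(1) by simp
  then show ?case
    using inj_on_lin_comb_extend[OF inj w(2)] by blast
qed

lemma emb_subspace_basis_exists:
  assumes W: "emb_subspace e W" and card_W: "card W = CARD('a) ^ k"
  shows "\<exists>\<beta>. (\<forall>i. \<beta> i \<in> W) \<and> bij_betw (lin_comb e k \<beta>) (coord_space k) W"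
proof -
  obtain \<beta> where \<beta>: "\<forall>i. \<beta> i \<in> W" and inj: "inj_on (lin_comb e k \<beta>) (coord_space k)"
    using emb_subspace_independent_exists[OF W card_W order.refl] by blast
  have "finite W"
    using card_W card_ge_0_finite finite_UNIV_card_ge_0[where 'a='a] by force
  then have "lin_comb e k \<beta> ` coord_space k = W"
    using inj card_W emb_subspace_lin_comb[OF W] \<beta>
    by (intro card_subset_eq) (auto simp: card_image card_coord_space)
  then show ?thesis
    using \<beta> inj by (auto simp: bij_betw_def)
qed

end

locale quadratic_form = field_embedding e for e :: "'a::{finite,field} \<Rightarrow> 'b::{finite,field}" +
  fixes Q :: "'b \<Rightarrow> 'a"
  assumes is_qform: "is_qform e Q" and two_neq_zero: "(2::'a) \<noteq> 0"
begin

abbreviation B where "B \<equiv> polar Q"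

lemma Q_smult: "Q (e a * x) = a\<^sup>2 * Q x"
  using is_qform by (simp add: is_qform_def)

lemma polar_add_left: "B (x + x') y = B x y + B x' y"
  using is_qform by (simp add: is_qform_def)

lemma polar_add_right: "B x (y + y') = B x y + B x y'"
  using is_qform by (simp add: is_qform_def)

lemma polar_smult_left: "B (e a * x) y = a * B x y"
  using is_qform by (simp add: is_qform_def)

lemma polar_smult_right: "B x (e a * y) = a * B x y"
  using is_qform by (simp add: is_qform_def)

lemma Q_0 [simp]: "Q 0 = 0"
  using Q_smult[of 0 0] by simp

lemma polar_0_left [simp]: "B 0 y = 0"
  using polar_smult_left[of 0 0 y] by simp

lemma polar_0_right [simp]: "B x 0 = 0"
  using polar_smult_right[of x 0 0] by simp

lemma polar_commute: "B x y = B y x"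
  by (simp add: polar_def add.commute)

lemma polar_self [simp]: "B x x = Q x"
proof -
  have "x + x = e 2 * x"
    by simp
  then have "Q (x + x) = 4 * Q x"
    using Q_smult[of 2 x] by simp
  then have "B x x = (4 * Q x - Q x - Q x) / 2"
    by (simp add: polar_def)
  also have "\<dots> = Q x"
    using two_neq_zero by (simp add: field_simps)
  finally show ?thesis .
qed

lemma Q_add: "Q (x + y) = Q x + Q y + 2 * B x y"
  using two_neq_zero by (simp add: polar_def field_simps)

lemma polar_diff_right: "B x (y - z) = B x y - B x z"
  using polar_add_right[of x "y - z" z] by simp

lemma polar_sum_left: "B (\<Sum>i\<in>A. f i) y = (\<Sum>i\<in>A. B (f i) y)"
  by (induction A rule: infinite_finite_induct) (simp_all add: polar_add_left)

lemma polar_sum_right: "B x (\<Sum>i\<in>A. f i) = (\<Sum>i\<in>A. B x (f i))"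
  by (induction A rule: infinite_finite_induct) (simp_all add: polar_add_right)

lemma polar_lin_comb_left: "B (lin_comb e n \<beta> c) y = (\<Sum>i<n. c i * B (\<beta> i) y)"
  by (simp add: lin_comb_def polar_sum_left polar_smult_left)

lemma polar_lin_comb_right: "B x (lin_comb e n \<beta> c) = (\<Sum>i<n. c i * B x (\<beta> i))"
  by (simp add: lin_comb_def polar_sum_right polar_smult_right)

lemma Q_lin_comb_orthogonal:
  assumes "\<And>i j. i < n \<Longrightarrow> j < n \<Longrightarrow> i \<noteq> j \<Longrightarrow> B (\<beta> i) (\<beta> j) = 0"
  shows "Q (lin_comb e n \<beta> c) = (\<Sum>i<n. Q (\<beta> i) * (c i)\<^sup>2)"
proof -
  have "Q (lin_comb e n \<beta> c) = B (lin_comb e n \<beta> c) (lin_comb e n \<beta> c)"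
    by simp
  also have "\<dots> = (\<Sum>i<n. c i * B (\<beta> i) (lin_comb e n \<beta> c))"
    by (rule polar_lin_comb_left)
  also have "\<dots> = (\<Sum>i<n. c i * (\<Sum>j<n. c j * B (\<beta> i) (\<beta> j)))"
    by (simp add: polar_lin_comb_right)
  also have "\<dots> = (\<Sum>i<n. c i * (\<Sum>j\<in>{i}. c j * B (\<beta> i) (\<beta> j)))"
    using assms by (intro sum.cong refl arg_cong2[where f = "(*)"] sum.mono_neutral_right) auto
  finally show ?thesis
    by (simp add: power2_eq_square mult_ac)
qed

lemma diag_form_Q:
  assumes "diag_form e n Q r \<beta> lam"
  shows "Q (lin_comb e n \<beta> c) = (\<Sum>i<r. lam i * (c i)\<^sup>2)"
  using assms by (simp add: diag_form_def lin_comb_def)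

lemma diag_form_rank_le:
  assumes "diag_form e n Q r \<beta> lam"
  shows "r \<le> n"
proof (rule ccontr)
  assume "\<not> r \<le> n"
  define c :: "nat \<Rightarrow> 'a" where "c = (\<lambda>j. if j = n then 1 else 0)"
  have "lin_comb e n \<beta> c = lin_comb e n \<beta> (\<lambda>_. 0)"
    by (rule lin_comb_cong) (simp add: c_def)
  then have "(\<Sum>i<r. lam i * (c i)\<^sup>2) = 0"
    using diag_form_Q[OF assms, of c] diag_form_Q[OF assms, of "\<lambda>_. 0"] by simp
  moreover have "(\<Sum>i<r. lam i * (c i)\<^sup>2) = (\<Sum>i\<in>{n}. lam i * (c i)\<^sup>2)"
    by (rule sum.mono_neutral_right) (use \<open>\<not> r \<le> n\<close> in \<open>auto simp: c_def\<close>)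
  ultimately show False
    using assms \<open>\<not> r \<le> n\<close> by (simp add: diag_form_def c_def)
qed

lemma diag_form_bij:
  assumes "diag_form e n Q r \<beta> lam"
  shows "bij_betw (lin_comb e n \<beta>) (coord_space n) UNIV"
  using assms by (simp add: diag_form_def is_basis_iff_bij_betw_lin_comb)

lemma card_level_set_diag_form:
  assumes d: "diag_form e n Q r \<beta> lam"
  shows "card {x. Q x = t} = CARD('a) ^ (n - r) * diag_count r lam t"
proof -
  have "bij_betw (lin_comb e n \<beta>) {c \<in> coord_space n. (\<Sum>i<r. lam i * (c i)\<^sup>2) = t} {x \<in> UNIV. Q x = t}"
    by (rule bij_betw_Collect[OF diag_form_bij[OF d]]) (simp add: diag_form_Q[OF d])
  then have "card {x. Q x = t} = card {c \<in> coord_space n. (\<Sum>i<r. lam i * (c i)\<^sup>2) = t}"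
    by (simp add: bij_betw_same_card)
  also have "\<dots> = CARD('a) ^ (n - r) * diag_count r lam t"
    unfolding diag_count_def by (rule card_coord_space_filter_prefix[OF diag_form_rank_le[OF d]]) simp
  finally show ?thesis .
qed

lemma polar_diag_form:
  assumes d: "diag_form e n Q r \<beta> lam"
  shows "B (lin_comb e n \<beta> c) (lin_comb e n \<beta> d) = (\<Sum>i<r. lam i * c i * d i)"
proof -
  have "2 * B (lin_comb e n \<beta> c) (lin_comb e n \<beta> d)
      = Q (lin_comb e n \<beta> (\<lambda>i. c i + d i)) - Q (lin_comb e n \<beta> c) - Q (lin_comb e n \<beta> d)"
    by (simp add: lin_comb_add Q_add)
  also have "\<dots> = 2 * (\<Sum>i<r. lam i * c i * d i)"
    by (simp add: diag_form_Q[OF d] power2_eq_square algebra_simps sum.distrib sum_subtractf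
        sum_distrib_left)
  finally show ?thesis
    using two_neq_zero by simp
qed

lemma lin_comb_in_radical_iff_diag_form:
  assumes d: "diag_form e n Q r \<beta> lam"
  shows "lin_comb e n \<beta> c \<in> qf_radical Q \<longleftrightarrow> (\<forall>i<r. c i = 0)"
proof
  assume c: "lin_comb e n \<beta> c \<in> qf_radical Q"
  show "\<forall>i<r. c i = 0"
  proof (intro allI impI)
    fix i assume "i < r"
    define u :: "nat \<Rightarrow> 'a" where "u = (\<lambda>j. if j = i then 1 else 0)"
    have "0 = (\<Sum>j<r. lam j * c j * u j)"
      using c by (simp add: qf_radical_def flip: polar_diag_form[OF d])
    also have "\<dots> = (\<Sum>j\<in>{i}. lam j * c j * u j)"
      by (rule sum.mono_neutral_right) (use \<open>i < r\<close> in \<open>auto simp: u_def\<close>)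
    also have "\<dots> = lam i * c i"
      by (simp add: u_def)
    finally show "c i = 0"
      using d \<open>i < r\<close> by (simp add: diag_form_def)
  qed
next
  assume "\<forall>i<r. c i = 0"
  then have zero: "B (lin_comb e n \<beta> c) (lin_comb e n \<beta> d) = 0" for d
    by (simp add: polar_diag_form[OF d])
  show "lin_comb e n \<beta> c \<in> qf_radical Q"
  proof (unfold qf_radical_def, intro CollectI allI)
    fix y
    obtain d where "y = lin_comb e n \<beta> d"
      using bij_betw_imp_surj_on[OF diag_form_bij[OF d]] by (metis UNIV_I imageE)
    then show "B (lin_comb e n \<beta> c) y = 0"
      by (simp add: zero)
  qed
qed

lemma card_radical_diag_form:
  assumes d: "diag_form e n Q r \<beta> lam"
  shows "card (qf_radical Q) = CARD('a) ^ (n - r)"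
proof -
  have "bij_betw (lin_comb e n \<beta>) {c \<in> coord_space n. \<forall>i<r. c i = 0} {x \<in> UNIV. x \<in> qf_radical Q}"
    by (rule bij_betw_Collect[OF diag_form_bij[OF d]]) (simp add: lin_comb_in_radical_iff_diag_form[OF d])
  then have "card (qf_radical Q) = card {c \<in> coord_space n. \<forall>i<r. c i = (0::'a)}"
    by (simp add: bij_betw_same_card)
  also have "\<dots> = CARD('a) ^ (n - r) * card {c \<in> coord_space r. \<forall>i<r. c i = (0::'a)}"
    by (rule card_coord_space_filter_prefix[OF diag_form_rank_le[OF d]]) simp
  also have "{c \<in> coord_space r. \<forall>i<r. c i = (0::'a)} = {\<lambda>_. 0}"
    by (auto simp: coord_space_def fun_eq_iff) (meson not_le)
  finally show ?thesis
    by simp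
qed

lemma qf_rank_diag_form:
  assumes d: "diag_form e n Q r \<beta> lam"
  shows "qf_rank n Q = r"
proof -
  have "(THE k. card (qf_radical Q) = CARD('a) ^ k) = n - r"
    using card_radical_diag_form[OF d] card_finite_field_ge_2[where 'a='a]
    by (intro the_equality) simp_all
  then show ?thesis
    using diag_form_rank_le[OF d] by (simp add: qf_rank_def)
qed

definition orthogonal_basis :: "'b set \<Rightarrow> nat \<Rightarrow> (nat \<Rightarrow> 'b) \<Rightarrow> nat \<Rightarrow> bool" where
  "orthogonal_basis W k \<beta> r \<longleftrightarrow> r \<le> k \<and> (\<forall>i. \<beta> i \<in> W) \<and> bij_betw (lin_comb e k \<beta>) (coord_space k) W \<and>
     (\<forall>i<k. \<forall>j<k. i \<noteq> j \<longrightarrow> B (\<beta> i) (\<beta> j) = 0) \<and>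
     (\<forall>i<r. Q (\<beta> i) \<noteq> 0) \<and> (\<forall>i. r \<le> i \<and> i < k \<longrightarrow> Q (\<beta> i) = 0)"

lemma orthogonal_basis_if_Q_vanishes:
  assumes W: "emb_subspace e W" and card_W: "card W = CARD('a) ^ k" and Q: "\<forall>w\<in>W. Q w = 0"
  shows "\<exists>\<beta>. orthogonal_basis W k \<beta> 0"
proof -
  obtain \<beta> where \<beta>: "\<forall>i. \<beta> i \<in> W" and bij: "bij_betw (lin_comb e k \<beta>) (coord_space k) W"
    using emb_subspace_basis_exists[OF W card_W] by blast
  have "\<beta> i + \<beta> j \<in> W" for i j
    using \<beta> W by (simp add: emb_subspace_def)
  then have "B (\<beta> i) (\<beta> j) = 0" for i j
    using Q \<beta> by (simp add: polar_def)
  then show ?thesis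
    using \<beta> bij Q by (auto simp: orthogonal_basis_def)
qed

lemma emb_subspace_split_anisotropic:
  assumes W: "emb_subspace e W" and v: "v \<in> W" "Q v \<noteq> 0"
  defines "W' \<equiv> {w \<in> W. B v w = 0}"
  shows "emb_subspace e W'" and "bij_betw (\<lambda>(s, w). e s * v + w) (UNIV \<times> W') W"
proof -
  show "emb_subspace e W'"
    using W unfolding emb_subspace_def W'_def by (auto simp: polar_add_right polar_smult_right)
  have polar_v: "B v (e s * v + w) = s * Q v" if "w \<in> W'" for s w
    using that by (simp add: polar_add_right polar_smult_right W'_def)
  define coeff where "coeff w = B v w / Q v" for w
  show "bij_betw (\<lambda>(s, w). e s * v + w) (UNIV \<times> W') W"
  proof (rule bij_betw_byWitness[where f' = "\<lambda>w. (coeff w, w - e (coeff w) * v)"])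
    show "\<forall>a\<in>UNIV \<times> W'. (\<lambda>w. (coeff w, w - e (coeff w) * v)) ((\<lambda>(s, w). e s * v + w) a) = a"
      using polar_v v(2) by (auto simp: coeff_def)
    show "\<forall>w\<in>W. (\<lambda>(s, w). e s * v + w) (coeff w, w - e (coeff w) * v) = w"
      by simp
    show "(\<lambda>(s, w). e s * v + w) ` (UNIV \<times> W') \<subseteq> W"
      using W v(1) unfolding W'_def emb_subspace_def by auto
    have "w - e (coeff w) * v \<in> W'" if "w \<in> W" for w
    proof -
      have "e (coeff w) * v \<in> W"
        using W v(1) by (simp add: emb_subspace_def)
      then show ?thesis
        using emb_subspace_diff[OF W that] v(2)
        by (simp add: W'_def coeff_def polar_diff_right polar_smult_right)
    qed
    then show "(\<lambda>w. (coeff w, w - e (coeff w) * v)) ` W \<subseteq> UNIV \<times> W'"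
      by auto
  qed
qed

lemma orthogonal_basis_case_nat:
  assumes W: "emb_subspace e W" and v: "v \<in> W" "Q v \<noteq> 0"
    and ob: "orthogonal_basis {w \<in> W. B v w = 0} k \<beta> r"
  shows "orthogonal_basis W (Suc k) (case_nat v \<beta>) (Suc r)"
proof -
  let ?W' = "{w \<in> W. B v w = 0}"
  have \<beta>: "\<beta> i \<in> W" "B v (\<beta> i) = 0" for i
    using ob by (auto simp: orthogonal_basis_def)
  have "bij_betw (map_prod id (lin_comb e k \<beta>)) (UNIV \<times> coord_space k) (UNIV \<times> ?W')"
    using ob by (intro bij_betw_map_prod bij_betw_id) (simp add: orthogonal_basis_def)
  then have "bij_betw ((\<lambda>(s, w). e s * v + w) \<circ> map_prod id (lin_comb e k \<beta>)) (UNIV \<times> coord_space k) W"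
    using emb_subspace_split_anisotropic(2)[OF W v] by (rule bij_betw_trans)
  then have "bij_betw ((\<lambda>(s, w). e s * v + w) \<circ> map_prod id (lin_comb e k \<beta>) \<circ> (\<lambda>c. (c 0, \<lambda>i. c (Suc i))))
      (coord_space (Suc k)) W"
    by (rule bij_betw_trans[OF bij_betw_coord_space_Suc_shift])
  moreover have "((\<lambda>(s, w). e s * v + w) \<circ> map_prod id (lin_comb e k \<beta>) \<circ> (\<lambda>c. (c 0, \<lambda>i. c (Suc i))))
      = lin_comb e (Suc k) (case_nat v \<beta>)"
    by (simp add: fun_eq_iff lin_comb_Suc_shift)
  ultimately have "bij_betw (lin_comb e (Suc k) (case_nat v \<beta>)) (coord_space (Suc k)) W"
    by simp
  moreover have "B (case_nat v \<beta> i) (case_nat v \<beta> j) = 0" if "i < Suc k" "j < Suc k" "i \<noteq> j" for i j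
    using that ob \<beta>(2) polar_commute by (cases i; cases j) (auto simp: orthogonal_basis_def)
  moreover have "Q (case_nat v \<beta> i) \<noteq> 0" if "i < Suc r" for i
    using that ob v(2) by (cases i) (auto simp: orthogonal_basis_def)
  moreover have "Q (case_nat v \<beta> i) = 0" if "Suc r \<le> i" "i < Suc k" for i
    using that ob by (cases i) (auto simp: orthogonal_basis_def)
  ultimately show ?thesis
    using ob v(1) \<beta>(1) by (auto simp: orthogonal_basis_def split: nat.split)
qed

lemma orthogonal_basis_exists:
  assumes "emb_subspace e W" "card W = CARD('a) ^ k"
  shows "\<exists>\<beta> r. orthogonal_basis W k \<beta> r"
  using assms
proof (induction k arbitrary: W)
  case 0
  then have "W = {0}"
    by (metis One_nat_def card_1_singletonE emb_subspace_def power_0 singletonD)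
  then show ?case
    using orthogonal_basis_if_Q_vanishes[OF 0] by auto
next
  case (Suc k)
  show ?case
  proof (cases "\<forall>w\<in>W. Q w = 0")
    case True
    then show ?thesis
      using orthogonal_basis_if_Q_vanishes[OF Suc.prems] by blast
  next
    case False
    then obtain v where v: "v \<in> W" "Q v \<noteq> 0"
      by blast
    note split = emb_subspace_split_anisotropic[OF Suc.prems(1) v]
    have "card W = CARD('a) * card {w \<in> W. B v w = 0}"
      using bij_betw_same_card[OF split(2)] by (simp add: card_cartesian_product)
    then have "card {w \<in> W. B v w = 0} = CARD('a) ^ k"
      using Suc.prems(2) card_finite_field_ge_2[where 'a='a] by simp
    then obtain \<beta> r where "orthogonal_basis {w \<in> W. B v w = 0} k \<beta> r"
      using Suc.IH[OF split(1)] by blast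
    then show ?thesis
      using orthogonal_basis_case_nat[OF Suc.prems(1) v] by blast
  qed
qed

lemma diag_form_exists:
  assumes "CARD('b) = CARD('a) ^ n"
  shows "\<exists>\<beta> lam. diag_form e n Q (qf_rank n Q) \<beta> lam"
proof -
  have "emb_subspace e UNIV"
    by (simp add: emb_subspace_def)
  then obtain \<beta> r where ob: "orthogonal_basis UNIV n \<beta> r"
    using orthogonal_basis_exists assms by blast
  have "Q (lin_comb e n \<beta> c) = (\<Sum>i<n. Q (\<beta> i) * (c i)\<^sup>2)" for c
    using ob by (intro Q_lin_comb_orthogonal) (auto simp: orthogonal_basis_def)
  also have "(\<Sum>i<n. Q (\<beta> i) * (c i)\<^sup>2) = (\<Sum>i<r. Q (\<beta> i) * (c i)\<^sup>2)" for c
    using ob by (intro sum.mono_neutral_right) (auto simp: orthogonal_basis_def)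
  finally have "diag_form e n Q r \<beta> (\<lambda>i. Q (\<beta> i))"
    using ob by (simp add: diag_form_def is_basis_iff_bij_betw_lin_comb orthogonal_basis_def lin_comb_def)
  then show ?thesis
    using qf_rank_diag_form by metis
qed

end

section \<open>The trace\<close>

context field_embedding
begin

lemma CHAR_emb: "CHAR('b) = CHAR('a)"
proof (rule CHAR_eqI)
  show "of_nat CHAR('a) = (0::'b)"
    by (metis emb_of_nat emb_0 of_nat_CHAR)
  show "CHAR('a) dvd n" if "of_nat n = (0::'b)" for n
    using that by (metis emb_eq_0_iff emb_of_nat of_nat_eq_0_iff_char_dvd)
qed

lemma range_emb_eq_roots:
  "range e = {z. z ^ CARD('a) = z}"
proof -
  let ?q = "CARD('a)"
  have sub: "range e \<subseteq> {z. z ^ ?q = z}"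
    by (auto simp flip: emb_power)
  define P :: "'b poly" where "P = monom 1 ?q - monom 1 1"
  have "coeff P ?q = 1"
    using card_finite_field_ge_2[where 'a='a] by (simp add: P_def)
  then have "P \<noteq> 0"
    by auto
  moreover have "degree P \<le> ?q"
    unfolding P_def using card_finite_field_ge_2[where 'a='a]
    by (intro degree_diff_le) (auto intro: order.trans[OF degree_monom_le])
  moreover have "{z. poly P z = 0} = {z. z ^ ?q = z}"
    by (simp add: P_def poly_monom)
  ultimately have "card {z::'b. z ^ ?q = z} \<le> ?q" and fin: "finite {z::'b. z ^ ?q = z}"
    using card_poly_roots_bound[of P] poly_roots_finite[of P] by simp_all
  moreover have "card (range e) = ?q"
    using is_emb by (simp add: is_emb_def card_image)
  ultimately show ?thesis
    using card_mono[OF fin sub] by (intro card_subset_eq[OF fin sub]) simp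
qed

end

lemma card_eq_card_times_card_fiber:
  fixes L :: "'b::{finite,ab_group_add} \<Rightarrow> 'a::{finite,ab_group_add}"
  assumes add: "\<And>x y. L (x + y) = L x + L y" and surj: "\<And>t. \<exists>s. L s = t"
  shows "CARD('b) = CARD('a) * card {y. L y = t}"
proof -
  have fiber: "card {y. L y = t} = card {y. L y = 0}" for t
  proof -
    obtain s where s: "L s = t"
      using surj by blast
    have "{y. L y = t} = (\<lambda>y. y + s) ` {y. L y = 0}"
    proof (intro set_eqI iffI)
      fix y assume "y \<in> {y. L y = t}"
      then have "L (y - s) = 0"
        using add[of "y - s" s] s by simp
      then show "y \<in> (\<lambda>y. y + s) ` {y. L y = 0}"
        by (intro image_eqI[of _ _ "y - s"]) auto
    qed (auto simp: add s)
    then show ?thesis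
      by (simp add: card_image inj_on_def)
  qed
  have "CARD('b) = (\<Sum>t\<in>(UNIV::'a set). \<Sum>y\<in>{y\<in>UNIV. L y = t}. 1)"
    by (subst sum.group) auto
  also have "\<dots> = (\<Sum>t\<in>UNIV. card {y. L y = t})"
    by simp
  also have "\<dots> = (\<Sum>t\<in>(UNIV::'a set). card {y. L y = 0})"
    by (rule sum.cong[OF refl fiber])
  finally show ?thesis
    using fiber[of t] by simp
qed

locale field_extension = field_embedding e for e :: "'a::{finite,field} \<Rightarrow> 'b::{finite,field}" +
  fixes s p m :: nat
  assumes card_ext: "CARD('b) = CARD('a) ^ s" and degree_pos: "s \<ge> 1"
    and prime_p: "prime p" and card_base: "CARD('a) = p ^ m"
begin

lemma prime_CHAR_ext: "prime CHAR('b)"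
  using CHAR_emb CHAR_finite_field[OF card_base prime_p] prime_p by simp

lemma card_power_eq_CHAR_power: "CARD('a) ^ j = CHAR('b) ^ (m * j)"
  using CHAR_emb CHAR_finite_field[OF card_base prime_p] card_base by (simp add: power_mult)

lemma power_card_power_sum: "(\<Sum>i\<in>A. f i :: 'b) ^ (CARD('a) ^ j) = (\<Sum>i\<in>A. f i ^ (CARD('a) ^ j))"
  by (rule freshmans_dream_sum'[OF prime_CHAR_ext card_power_eq_CHAR_power])

lemma power_card_power_add: "(x + y :: 'b) ^ (CARD('a) ^ j) = x ^ (CARD('a) ^ j) + y ^ (CARD('a) ^ j)"
  by (rule freshmans_dream'[OF prime_CHAR_ext card_power_eq_CHAR_power])

lemma emb_trace: "e (trace e s y) = (\<Sum>j<s. y ^ (CARD('a) ^ j))"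
proof -
  let ?q = "CARD('a)" and ?S = "\<Sum>j<s. y ^ (CARD('a) ^ j)"
  have "?S ^ ?q = (\<Sum>j<s. (y ^ (?q ^ j)) ^ ?q)"
    using power_card_power_sum[of "\<lambda>j. y ^ (?q ^ j)" "{..<s}" 1] by simp
  also have "\<dots> = (\<Sum>j<s. y ^ (?q ^ Suc j))"
    by (simp only: power_mult[symmetric] power_Suc2[symmetric])
  also have "\<dots> = ?S"
  proof -
    have "y ^ (?q ^ s) = y"
      using finite_field_power_card[of y] card_ext by simp
    then show ?thesis
      using sum.lessThan_Suc_shift[of "\<lambda>j. y ^ (?q ^ j)" s] by simp
  qed
  finally obtain a where a: "?S = e a"
    using range_emb_eq_roots by blast
  have "trace e s y = a"
    unfolding trace_def using a by (intro the_equality) auto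
  then show ?thesis
    using a by simp
qed

lemma trace_add: "trace e s (y + y') = trace e s y + trace e s y'"
  using emb_trace[of "y + y'"] emb_trace[of y] emb_trace[of y']
  by (simp add: power_card_power_add sum.distrib flip: emb_eq_iff)

lemma trace_smult: "trace e s (e a * y) = a * trace e s y"
proof -
  have "(e a * y) ^ (CARD('a) ^ j) = e a * y ^ (CARD('a) ^ j)" for j
    by (simp add: power_mult_distrib flip: emb_power)
  then show ?thesis
    using emb_trace[of "e a * y"] emb_trace[of y] by (simp add: sum_distrib_left flip: emb_eq_iff)
qed

lemma trace_0 [simp]: "trace e s 0 = 0"
  using trace_smult[of 0 0] by simp

lemma trace_diff: "trace e s (y - y') = trace e s y - trace e s y'"
  using trace_add[of "y - y'" y'] by simp

lemma trace_not_identically_zero: "\<exists>y. trace e s y \<noteq> 0"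
proof -
  let ?q = "CARD('a)"
  define P :: "'b poly" where "P = (\<Sum>j<s. monom 1 (?q ^ j))"
  have "coeff P (?q ^ (s - 1)) = (\<Sum>j<s. if ?q ^ j = ?q ^ (s - 1) then 1 else 0)"
    by (simp add: P_def coeff_sum)
  also have "\<dots> = (\<Sum>j<s. if j = s - 1 then 1 else 0)"
    using card_finite_field_ge_2[where 'a='a] by simp
  also have "\<dots> = 1"
    using degree_pos by simp
  finally have "P \<noteq> 0"
    by auto
  moreover have "degree P \<le> ?q ^ (s - 1)"
    unfolding P_def using card_finite_field_ge_2[where 'a='a]
    by (intro degree_sum_le) (auto intro: order.trans[OF degree_monom_le] power_increasing)
  ultimately have "card {y. poly P y = 0} \<le> ?q ^ (s - 1)"
    using card_poly_roots_bound[of P] by simp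
  also have "\<dots> < CARD('b)"
    using card_ext degree_pos card_finite_field_ge_2[where 'a='a] by (simp add: power_strict_increasing)
  finally have "{y. poly P y = 0} \<noteq> UNIV"
    by auto
  then obtain y where "poly P y \<noteq> 0"
    by auto
  moreover have "poly P y = e (trace e s y)"
    by (simp add: P_def poly_sum poly_monom emb_trace)
  ultimately show ?thesis
    by auto
qed

lemma card_trace_fiber:
  assumes "b \<noteq> 0"
  shows "card {y. trace e s (b * y) = t} = CARD('a) ^ (s - 1)"
proof -
  obtain y0 where y0: "trace e s y0 \<noteq> 0"
    using trace_not_identically_zero by blast
  have "\<exists>y. trace e s (b * y) = t'" for t'
  proof
    show "trace e s (b * (e (t' / trace e s y0) * (y0 / b))) = t'"
      using assms y0 by (simp add: trace_smult)
  qed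
  then have "CARD('b) = CARD('a) * card {y. trace e s (b * y) = t}"
    by (intro card_eq_card_times_card_fiber) (simp_all add: distrib_left trace_add)
  then show ?thesis
    using card_ext degree_pos finite_UNIV_card_ge_0[where 'a='a] by (simp add: power_eq_if)
qed

end

section \<open>The code\<close>

lemma minus_one_power_half_pred_power:
  assumes "odd p"
  shows "(-1::int) ^ ((p ^ m - 1) div 2) = (-1) ^ ((p - 1) div 2 * m)"
proof (induction m)
  case (Suc m)
  obtain k where k: "p = 2 * k + 1"
    using assms oddE by blast
  have "odd (p ^ m)"
    using assms by simp
  then obtain j where j: "p ^ m = 2 * j + 1"
    using oddE by blast
  have "p ^ Suc m - 1 = 2 * (p * j + k)"
    using j k by (simp add: algebra_simps)
  then have "(p ^ Suc m - 1) div 2 = p * ((p ^ m - 1) div 2) + (p - 1) div 2"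
    using j k by simp
  then show ?case
    using Suc.IH assms by (simp add: power_add power_mult k)
qed simp

lemma real_power_diff_mult_power:
  fixes x :: real
  assumes "x > 0" "j < r" "r \<le> n"
  shows "x ^ (n - r) * x ^ j = x ^ (n - 1) * x powr (real j + 1 - real r)"
proof -
  have "x ^ (n - r) * x ^ j = x ^ (n - r + j)"
    by (simp add: power_add)
  also have "\<dots> = x powr real (n - r + j)"
    by (rule powr_realpow[symmetric, OF assms(1)])
  also have "real (n - r + j) = real (n - 1) + (real j + 1 - real r)"
    using assms(2,3) by simp
  finally show ?thesis
    using assms(1) by (simp add: powr_add powr_realpow)
qed

locale quadratic_code =
  fixes p m m1 m2 M q :: nat
    and e1 :: "'a::{finite,field} \<Rightarrow> 'b::{finite,field}"
    and e2 :: "'a \<Rightarrow> 'c::{finite,field}"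
    and Q :: "'b \<Rightarrow> 'a"
  assumes prime_p: "prime p" and odd_p: "odd p" and q_def: "q = CARD('a)" and card_a: "q = p ^ m"
    and m1_pos: "m1 \<ge> 1" and m2_pos: "m2 \<ge> 1" and M_def: "M = m1 + m2"
    and e1: "is_emb e1" and card_b: "CARD('b) = q ^ m1"
    and e2: "is_emb e2" and card_c: "CARD('c) = q ^ m2"
    and is_qform: "is_qform e1 Q" and Q_nonzero: "Q \<noteq> (\<lambda>_. 0)" and rank_pos: "qf_rank m1 Q \<ge> 1"
begin

abbreviation r where "r \<equiv> qf_rank m1 Q"
abbreviation cw where "cw \<equiv> codeword e2 m2 Q"

lemma odd_card_a: "odd CARD('a)"
  using odd_p card_a q_def by simp

lemma q_ge_3: "q \<ge> 3"
  using card_finite_field_ge_3[OF odd_card_a] q_def by simp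

sublocale Qf: quadratic_form e1 Q
  using e1 is_qform two_neq_zero_finite_field[OF odd_card_a] by unfold_locales

sublocale Tr: field_extension e2 m2 p m
  using e2 card_c m2_pos prime_p card_a q_def by unfold_locales simp_all

lemma rank_le: "r \<le> m1"
  by (simp add: qf_rank_def)

definition diag_coeffs :: "nat \<Rightarrow> 'a" where
  "diag_coeffs = snd (SOME (\<beta>, lam). diag_form e1 m1 Q r \<beta> lam)"

lemma diag_form_diag_coeffs: "\<exists>\<beta>. diag_form e1 m1 Q r \<beta> diag_coeffs"
proof -
  have "\<exists>x. diag_form e1 m1 Q r (fst x) (snd x)"
    using Qf.diag_form_exists card_b q_def by auto
  then have "diag_form e1 m1 Q r (fst (SOME x. diag_form e1 m1 Q r (fst x) (snd x))) diag_coeffs"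
    unfolding diag_coeffs_def case_prod_beta by (rule someI_ex)
  then show ?thesis
    by blast
qed

lemma diag_coeffs_nonzero: "i < r \<Longrightarrow> diag_coeffs i \<noteq> 0"
  using diag_form_diag_coeffs by (auto simp: diag_form_def)

lemma qf_Delta_eq: "qf_Delta e1 m1 Q = (\<Prod>i<r. diag_coeffs i)"
  by (simp add: qf_Delta_def diag_coeffs_def Let_def)

lemma card_Q_fiber:
  "card {x. Q x = t} = q ^ (m1 - r) * diag_count r diag_coeffs t"
  using diag_form_diag_coeffs Qf.card_level_set_diag_form q_def by blast

lemma eta_minus_1_eq: "eta (-1::'a) = (-1) ^ ((p - 1) div 2 * m)"
  using eta_minus_1[OF odd_card_a] minus_one_power_half_pred_power[OF odd_p] card_a q_def by simp

lemma qf_eps_eq: "qf_eps p m e1 m1 Q = eta (qf_Delta e1 m1 Q) * eta (-1::'a) ^ ((r + 1) div 2)"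
proof -
  define h k where "h = (p - 1) div 2" and "k = (r + 1) div 2"
  have parity: "(if even n then n else n + 1) = 2 * ((n + 1) div 2)" for n :: nat
    by presburger
  have "p - 1 = 2 * h"
    using odd_p unfolding h_def by presburger
  moreover have "(if even r then r else r + 1) = 2 * k"
    unfolding k_def by (rule parity)
  ultimately have "(p - 1) * m * (if even r then r else r + 1) = 4 * (h * m * k)"
    by simp
  then have "(if even r then (p - 1) * m * r div 4 else (p - 1) * m * (r + 1) div 4) = h * m * k"
    by (simp only: if_distrib[of "\<lambda>x. (p - 1) * m * x div 4", symmetric])
  then show ?thesis
    by (simp add: qf_eps_def qf_varepsilon_def eta_minus_1_eq Let_def power_mult h_def k_def)
qed

text \<open>The coordinate \<open>(0, 0)\<close> left out of \<^const>\<open>Fstar\<close> would carry the value \<open>0\<close> anyway.\<close>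

lemma codeword_eq: "cw a b = (\<lambda>z. a * Q (fst z) + trace e2 m2 (b * snd z))"
  by (auto simp: codeword_def Fstar_def fun_eq_iff)

lemma card_Fstar: "card (Fstar :: ('b \<times> 'c) set) = q ^ M - 1"
  using card_b card_c by (simp add: Fstar_def card_Diff_singleton M_def power_add)

lemma comp_vec_codeword: "comp_vec (cw a b) w = card {z. cw a b z = w} - of_bool (w = 0)"
proof -
  have "{z \<in> Fstar. cw a b z = w} = {z. cw a b z = w} - {(0, 0)}"
    by (auto simp: Fstar_def)
  moreover have "(0, 0) \<in> {z. cw a b z = w} \<longleftrightarrow> w = 0"
    by (auto simp: codeword_eq)
  ultimately show ?thesis
    by (simp add: comp_vec_def card_Diff_singleton_if)
qed

lemma card_codeword_fiber_nonzero:
  assumes "b \<noteq> 0"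
  shows "card {z. cw a b z = w} = q ^ (M - 1)"
proof -
  have "{z. cw a b z = w} = (SIGMA x:UNIV. {y. trace e2 m2 (b * y) = w - a * Q x})"
    by (auto simp: codeword_eq algebra_simps)
  then have "card {z. cw a b z = w} = q ^ m1 * q ^ (m2 - 1)"
    using Tr.card_trace_fiber[OF assms] card_b q_def by simp
  also have "\<dots> = q ^ (M - 1)"
    using m2_pos M_def by (simp flip: power_add)
  finally show ?thesis .
qed

lemma card_codeword_fiber_0:
  "card {z. cw a 0 z = w} = q ^ m2 * card {x. a * Q x = w}"
proof -
  have "{z. cw a 0 z = w} = {x. a * Q x = w} \<times> UNIV"
    by (auto simp: codeword_eq)
  then show ?thesis
    using card_c by (simp add: card_cartesian_product)
qed

lemma comp_vec_0: "comp_vec (cw 0 0) = (\<lambda>w. if w = 0 then q ^ M - 1 else 0)"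
proof -
  have "card {z. cw 0 0 z = w} = (if w = 0 then q ^ M else 0)" for w
    using card_b card_c by (simp add: codeword_eq M_def power_add)
  then show ?thesis
    by (simp add: fun_eq_iff comp_vec_codeword)
qed

lemma comp_vec_nonzero:
  assumes "b \<noteq> 0"
  shows "comp_vec (cw a b) = (\<lambda>w. if w = 0 then q ^ (M - 1) - 1 else q ^ (M - 1))"
  by (simp add: fun_eq_iff comp_vec_codeword card_codeword_fiber_nonzero[OF assms])

lemma real_comp_vec_diag_count:
  assumes "a \<noteq> 0"
  shows "real (comp_vec (cw a 0) w) = real q ^ (M - r) * real (diag_count r diag_coeffs (w / a)) - of_bool (w = 0)"
proof -
  have "{x. a * Q x = w} = {x. Q x = w / a}"
    using assms by (auto simp: field_simps)
  moreover have "M - r = m2 + (m1 - r)"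
    using rank_le M_def by simp
  ultimately have "card {z. cw a 0 z = w} = q ^ (M - r) * diag_count r diag_coeffs (w / a)"
    by (simp add: card_codeword_fiber_0 card_Q_fiber power_add)
  moreover have "card {z. cw a 0 z = w} \<ge> of_bool (w = 0)"
    using card_mono[of "{z. cw a 0 z = w}" "{(0, 0)}"] by (auto simp: codeword_eq)
  ultimately show ?thesis
    by (simp add: comp_vec_codeword)
qed

abbreviation eps where "eps \<equiv> qf_eps p m e1 m1 Q"

lemma int_diag_count_coeffs:
  "int (diag_count r diag_coeffs t) =
    (if even r
     then int q ^ (r - 1) + (if t = 0 then int q - 1 else -1) * int q ^ (r div 2 - 1) * eps
     else int q ^ (r - 1) + int q ^ ((r - 1) div 2) * eta ((-1) ^ ((r - 1) div 2) * t * qf_Delta e1 m1 Q))"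
proof -
  have "eps = eta ((-1) ^ (r div 2) * qf_Delta e1 m1 Q)" if "even r"
    using that by (simp add: qf_eps_eq eta_mult[OF odd_card_a] eta_power[OF odd_card_a] mult.commute)
  then show ?thesis
    using diag_count_closed_form[OF odd_card_a, of r diag_coeffs t] diag_coeffs_nonzero rank_pos q_def
    by (simp add: qf_Delta_eq)
qed

lemma real_q_power_M_minus_rank:
  assumes "j < r"
  shows "real q ^ (M - r) * real q ^ j = real q ^ (M - 1) * real q powr (real j + 1 - real r)"
  using real_power_diff_mult_power[of "real q" j r M] assms q_ge_3 rank_le M_def by simp

lemma real_q_power_M_minus_rank_pred: "real q ^ (M - r) * real q ^ (r - 1) = real q ^ (M - 1)"
  using real_q_power_M_minus_rank[of "r - 1"] rank_pos q_ge_3 by simp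

lemma real_comp_vec_even:
  assumes "even r" "a \<noteq> 0"
  shows "real (comp_vec (cw a 0) w) =
    (if w = 0 then real q ^ (M - 1) * (1 + real_of_int eps * real q powr (- (real r / 2)) * (real q - 1)) - 1
     else real q ^ (M - 1) * (1 - real_of_int eps * real q powr (- (real r / 2))))"
proof -
  have "r \<ge> 2"
    using assms(1) rank_pos by (auto elim!: evenE)
  have "real q ^ (M - r) * real q ^ (r div 2 - 1) = real q ^ (M - 1) * real q powr (real (r div 2 - 1) + 1 - real r)"
    by (rule real_q_power_M_minus_rank) (use \<open>r \<ge> 2\<close> in simp)
  also have "real (r div 2 - 1) + 1 - real r = - (real r / 2)"
    using assms(1) \<open>r \<ge> 2\<close> by (auto elim!: evenE)
  finally have pow: "real q ^ (M - r) * real q ^ (r div 2 - 1) = real q ^ (M - 1) * real q powr (- (real r / 2))" .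
  have "real (diag_count r diag_coeffs (w / a)) =
      real q ^ (r - 1) + (if w = 0 then real q - 1 else -1) * real q ^ (r div 2 - 1) * real_of_int eps"
    using arg_cong[OF int_diag_count_coeffs[of "w / a"], of real_of_int] assms by simp
  then have "real (comp_vec (cw a 0) w) = real q ^ (M - r) * real q ^ (r - 1)
      + (if w = 0 then real q - 1 else -1) * real_of_int eps * (real q ^ (M - r) * real q ^ (r div 2 - 1))
      - of_bool (w = 0)"
    using real_comp_vec_diag_count[OF assms(2)] by (simp add: algebra_simps)
  also have "\<dots> = real q ^ (M - 1)
      + (if w = 0 then real q - 1 else -1) * real_of_int eps * (real q ^ (M - 1) * real q powr (- (real r / 2)))
      - of_bool (w = 0)"
    by (simp only: real_q_power_M_minus_rank_pred pow)
  finally show ?thesis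
    by (cases "w = 0") (simp_all add: algebra_simps)
qed

lemma eta_odd_rank_term:
  assumes "odd r" "a \<noteq> 0"
  shows "eta ((-1) ^ ((r - 1) div 2) * (w / a) * qf_Delta e1 m1 Q) = eta a * eps * eta (- w)"
proof -
  have "(r + 1) div 2 = Suc ((r - 1) div 2)"
    using assms(1) by (auto elim!: oddE)
  moreover have "eta (- w) = eta (-1::'a) * eta w"
    using eta_mult[OF odd_card_a, of "-1" w] by simp
  ultimately show ?thesis
    using eta_times_self[of "-1::'a"] eta_times_self[OF assms(2)]
    by (simp add: qf_eps_eq eta_mult[OF odd_card_a] eta_divide[OF odd_card_a] eta_power[OF odd_card_a]
        algebra_simps)
qed

lemma real_comp_vec_odd:
  assumes "odd r" "a \<noteq> 0"
  shows "real (comp_vec (cw a 0) w) =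
    (if w = 0 then real q ^ (M - 1) - 1
     else real q ^ (M - 1) * (1 + real_of_int (eta a) * real_of_int eps * real q powr ((1 - real r) / 2)
       * real_of_int (eta (- w))))"
proof -
  have "real q ^ (M - r) * real q ^ ((r - 1) div 2) = real q ^ (M - 1) * real q powr (real ((r - 1) div 2) + 1 - real r)"
    by (rule real_q_power_M_minus_rank) (use rank_pos in simp)
  also have "real ((r - 1) div 2) + 1 - real r = (1 - real r) / 2"
    using assms(1) by (auto elim!: oddE)
  finally have pow: "real q ^ (M - r) * real q ^ ((r - 1) div 2) = real q ^ (M - 1) * real q powr ((1 - real r) / 2)" .
  have "real (diag_count r diag_coeffs (w / a)) =
      real q ^ (r - 1) + real q ^ ((r - 1) div 2) * real_of_int (eta a * eps * eta (- w))"
    using arg_cong[OF int_diag_count_coeffs[of "w / a"], of real_of_int] assms eta_odd_rank_term[OF assms]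
    by simp
  then have "real (comp_vec (cw a 0) w) = real q ^ (M - r) * real q ^ (r - 1)
      + real_of_int (eta a * eps * eta (- w)) * (real q ^ (M - r) * real q ^ ((r - 1) div 2))
      - of_bool (w = 0)"
    using real_comp_vec_diag_count[OF assms(2)] by (simp add: algebra_simps)
  also have "\<dots> = real q ^ (M - 1)
      + real_of_int (eta a * eps * eta (- w)) * (real q ^ (M - 1) * real q powr ((1 - real r) / 2))
      - of_bool (w = 0)"
    by (simp only: real_q_power_M_minus_rank_pred pow)
  finally show ?thesis
    by (cases "w = 0") (simp_all add: algebra_simps)
qed

lemma codeword_add: "(\<lambda>z. cw a b z + cw a' b' z) = cw (a + a') (b + b')"
  by (simp add: fun_eq_iff codeword_eq algebra_simps Tr.trace_add)

lemma codeword_smult: "(\<lambda>z. s * cw a b z) = cw (s * a) (e2 s * b)"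
  by (simp add: fun_eq_iff codeword_eq distrib_left mult.assoc Tr.trace_smult)

lemma codeword_diff: "(\<lambda>z. cw a b z - cw a' b' z) = cw (a - a') (b - b')"
  by (simp add: fun_eq_iff codeword_eq algebra_simps Tr.trace_diff)

lemma codeword_eq_0_iff: "cw a b = (\<lambda>_. 0) \<longleftrightarrow> a = 0 \<and> b = 0"
proof
  assume cw_0: "cw a b = (\<lambda>_. 0)"
  have "b = 0"
  proof (rule ccontr)
    assume "b \<noteq> 0"
    have "card {y. trace e2 m2 (b * y) = 1} > 0"
      using Tr.card_trace_fiber[OF \<open>b \<noteq> 0\<close>] q_def q_ge_3 by simp
    then obtain y where "trace e2 m2 (b * y) = 1"
      by (metis (mono_tags) card.empty less_irrefl empty_Collect_eq)
    then show False
      using fun_cong[OF cw_0, of "(0, y)"] by (simp add: codeword_eq)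
  qed
  moreover obtain x where "Q x \<noteq> 0"
    using Q_nonzero by auto
  then have "a = 0"
    using fun_cong[OF cw_0, of "(x, 0)"] \<open>b = 0\<close> by (simp add: codeword_eq)
  ultimately show "a = 0 \<and> b = 0"
    by simp
qed (simp add: codeword_eq)

lemma codeword_eq_iff: "cw a b = cw a' b' \<longleftrightarrow> a = a' \<and> b = b'"
  using codeword_eq_0_iff[of "a - a'" "b - b'"] codeword_diff[of a b a' b'] by (auto simp: fun_eq_iff)

lemma code_CQ_eq_image: "code_CQ e2 m2 Q = (\<lambda>(a, b). cw a b) ` UNIV"
  by (auto simp: code_CQ_def)

lemma inj_codeword: "inj (\<lambda>(a, b). cw a b)"
  by (auto simp: inj_def codeword_eq_iff)

lemma card_code_CQ: "card (code_CQ e2 m2 Q) = q ^ (m2 + 1)"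
  using card_c q_def by (simp add: code_CQ_eq_image card_image[OF inj_codeword])

lemma is_linear_code_CQ: "is_linear_code (code_CQ e2 m2 Q)"
proof -
  have "(\<lambda>_. 0) = cw 0 0"
    using codeword_eq_0_iff[of 0 0] by simp
  then show ?thesis
    unfolding is_linear_code_def code_CQ_eq_image
    by (auto simp: image_iff codeword_add codeword_smult)
qed

lemma card_code_CQ_filter:
  assumes "\<And>a b. b \<noteq> 0 \<Longrightarrow> P (cw a b) \<longleftrightarrow> P1"
  shows "card {c \<in> code_CQ e2 m2 Q. P c} =
    of_bool (P (cw 0 0)) + of_bool P1 * (q * (q ^ m2 - 1)) + card {a. a \<noteq> 0 \<and> P (cw a 0)}"
proof -
  let ?A0 = "{ab :: 'a \<times> 'c. ab = (0, 0) \<and> P (cw 0 0)}"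
  let ?A1 = "{ab :: 'a \<times> 'c. snd ab \<noteq> 0 \<and> P1}"
  let ?A2 = "(\<lambda>a. (a, 0::'c)) ` {a. a \<noteq> 0 \<and> P (cw a 0)}"
  have "{ab. P (cw (fst ab) (snd ab))} = ?A0 \<union> ?A1 \<union> ?A2"
  proof (intro set_eqI)
    fix ab :: "'a \<times> 'c"
    obtain a b where ab: "ab = (a, b)"
      by fastforce
    show "ab \<in> {ab. P (cw (fst ab) (snd ab))} \<longleftrightarrow> ab \<in> ?A0 \<union> ?A1 \<union> ?A2"
      using assms[of b a] by (cases "b = 0"; cases "a = 0") (auto simp: ab image_iff)
  qed
  moreover have "{c \<in> code_CQ e2 m2 Q. P c} = (\<lambda>(a, b). cw a b) ` {ab. P (cw (fst ab) (snd ab))}"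
    by (auto simp: code_CQ_eq_image)
  ultimately have "card {c \<in> code_CQ e2 m2 Q. P c} = card (?A0 \<union> ?A1 \<union> ?A2)"
    by (simp add: card_image inj_on_subset[OF inj_codeword])
  also have "\<dots> = card ?A0 + card ?A1 + card ?A2"
    by (subst card_Un_disjoint, auto)+
  also have "card ?A1 = of_bool P1 * (q * (q ^ m2 - 1))"
  proof -
    have "?A1 = (if P1 then UNIV \<times> (UNIV - {0}) else {})"
      by auto
    then show ?thesis
      using card_c q_def by (simp add: card_cartesian_product card_Diff_singleton)
  qed
  also have "card ?A0 = of_bool (P (cw 0 0))"
    by (cases "P (cw 0 0)") simp_all
  also have "card ?A2 = card {a. a \<noteq> 0 \<and> P (cw a 0)}"
    by (rule card_image) (simp add: inj_on_def)
  finally show ?thesis .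
qed

lemma hwt_codeword: "hwt (cw a b) = q ^ M - 1 - comp_vec (cw a b) 0"
proof -
  have "{z \<in> Fstar. cw a b z \<noteq> 0} = Fstar - {z \<in> Fstar. cw a b z = 0}"
    by auto
  then show ?thesis
    by (simp add: hwt_def comp_vec_def card_Diff_subset card_Fstar)
qed

lemma q_power_M: "q ^ M = q ^ (M - 1) * q"
  using M_def m1_pos by (metis Suc_diff_1 add_gr_0 less_le_trans zero_less_one power_Suc2)

lemma hwt_codeword_if_comp_vec_0:
  assumes "comp_vec (cw a b) 0 = q ^ (M - 1) - 1"
  shows "hwt (cw a b) = q ^ (M - 1) * (q - 1)"
proof -
  have "q ^ (M - 1) \<ge> 1"
    using q_ge_3 by simp
  then show ?thesis
    using assms by (simp add: hwt_codeword q_power_M diff_mult_distrib2)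
qed

lemma hwt_codeword_nonzero:
  assumes "b \<noteq> 0"
  shows "hwt (cw a b) = q ^ (M - 1) * (q - 1)"
  using comp_vec_nonzero[OF assms] by (simp add: hwt_codeword_if_comp_vec_0)

end

lemma comp_vec_le_card_Fstar:
  fixes c :: "'b::{finite,zero} \<times> 'c::{finite,zero} \<Rightarrow> 'a"
  shows "comp_vec c w \<le> card (Fstar :: ('b \<times> 'c) set)"
  unfolding comp_vec_def by (rule card_mono) auto

lemma sum_ceiling_geometric:
  fixes q n k :: nat
  assumes "q > 0" "k \<le> n + 1"
  shows "(\<Sum>i<k. \<lceil>real (q ^ n * (q - 1)) / real q ^ i\<rceil>) = int q ^ (n + 1) - int q ^ (n + 1 - k)"
  using assms(2)
proof (induction k)
  case (Suc k)
  have "real q ^ n = real q ^ (n - k) * real q ^ k"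
    using Suc.prems by (simp flip: power_add)
  then have "real (q ^ n * (q - 1)) / real q ^ k = real (q ^ (n - k) * (q - 1))"
    using assms(1) by simp
  moreover have "int (q ^ (n - k) * (q - 1)) = int q ^ (n - k) * (int q - 1)"
    using assms(1) by simp
  moreover have "n + 1 - k = Suc (n - k)" "n + 1 - Suc k = n - k"
    using Suc.prems by simp_all
  ultimately have "\<lceil>real (q ^ n * (q - 1)) / real q ^ k\<rceil> = int q ^ (n + 1 - k) - int q ^ (n + 1 - Suc k)"
    by (simp add: algebra_simps)
  then show ?case
    using Suc by simp
qed simp

context quadratic_code
begin

lemma eps_cases: "eps = 1 \<or> eps = -1"
proof -
  have "qf_Delta e1 m1 Q \<noteq> 0"
    using diag_coeffs_nonzero by (simp add: qf_Delta_eq)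
  then have "eta (qf_Delta e1 m1 Q) \<in> {-1, 1}"
    using eta_cases by auto
  moreover have "eta (-1::'a) ^ ((r + 1) div 2) \<in> {-1, 1}"
    using eta_cases[of "-1::'a"] by (auto simp: minus_one_power_iff)
  ultimately show ?thesis
    unfolding qf_eps_eq by auto
qed

lemma real_q_power_M: "real q ^ M = real q ^ (M - 1) * real q"
  using arg_cong[OF q_power_M, of real] by simp

lemma hwt_codeword_0 [simp]: "hwt (cw 0 0) = 0"
  using codeword_eq_0_iff[of 0 0] by (simp add: hwt_def)

abbreviation weight_even where
  "weight_even \<equiv> real q ^ (M - 1) * (real q - 1) * (1 - real_of_int eps * real q powr (- (real r / 2)))"

lemma real_hwt_codeword_even:
  assumes "even r" "a \<noteq> 0"
  shows "real (hwt (cw a 0)) = weight_even"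
proof -
  have "comp_vec (cw a 0) 0 \<le> q ^ M - 1"
    using comp_vec_le_card_Fstar card_Fstar by metis
  then have "real (hwt (cw a 0)) = real (q ^ M - 1) - real (comp_vec (cw a 0) 0)"
    by (simp add: hwt_codeword)
  also have "real (q ^ M - 1) = real q ^ M - 1"
    using q_ge_3 by simp
  finally have "real (hwt (cw a 0)) = real q ^ M - 1 - real (comp_vec (cw a 0) 0)" .
  then show ?thesis
    using real_comp_vec_even[OF assms, of 0] by (simp add: real_q_power_M algebra_simps)
qed

lemma weight_even_bounds:
  assumes "even r"
  shows "weight_even > 0" and "weight_even \<noteq> real (q ^ (M - 1) * (q - 1))"
proof -
  define t where "t = real q powr (- (real r / 2))"
  have "t > 0" "t < 1"
    using q_ge_3 rank_pos by (simp_all add: t_def powr_less_one)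
  then have "real_of_int eps * t < 1" "real_of_int eps * t \<noteq> 0"
    using eps_cases by auto
  moreover have "real q ^ (M - 1) * (real q - 1) > 0"
    using q_ge_3 by simp
  ultimately show "weight_even > 0" "weight_even \<noteq> real (q ^ (M - 1) * (q - 1))"
    using q_ge_3 by (auto simp: t_def)
qed

lemma weight_distribution_even:
  assumes "even r"
  shows "card {c \<in> code_CQ e2 m2 Q. hwt c = w} =
    (if w = 0 then 1
     else if w = q ^ (M - 1) * (q - 1) then q * (q ^ m2 - 1)
     else if real w = weight_even then q - 1
     else 0)"
proof -
  have "hwt (cw a 0) = w \<longleftrightarrow> real w = weight_even" if "a \<noteq> 0" for a
    using real_hwt_codeword_even[OF assms that] by (metis of_nat_eq_iff)
  then have "{a. a \<noteq> 0 \<and> hwt (cw a 0) = w} = (if real w = weight_even then {a. a \<noteq> 0} else {})"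
    by auto
  then have "card {a. a \<noteq> 0 \<and> hwt (cw a 0) = w} = of_bool (real w = weight_even) * (q - 1)"
    using q_def by (simp add: card_Diff_singleton Collect_neg_eq Compl_eq_Diff_UNIV)
  then show ?thesis
    using card_code_CQ_filter[of "\<lambda>c. hwt c = w" "w = q ^ (M - 1) * (q - 1)"]
      hwt_codeword_nonzero weight_even_bounds[OF assms] q_ge_3
    by (auto simp flip: of_nat_eq_iff)
qed

lemma comp_vec_eq_iff_real: "comp_vec c = k \<longleftrightarrow> (\<forall>w. real (k w) = real (comp_vec c w))"
  by (auto simp: fun_eq_iff)

lemma card_code_CQ_comp_vec:
  "card {c \<in> code_CQ e2 m2 Q. comp_vec c = k} =
    of_bool (k = (\<lambda>w. if w = 0 then q ^ M - 1 else 0))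
    + (q * (q ^ m2 - 1)) * of_bool (k = (\<lambda>w. if w = 0 then q ^ (M - 1) - 1 else q ^ (M - 1)))
    + card {a. a \<noteq> 0 \<and> comp_vec (cw a 0) = k}"
  using card_code_CQ_filter[of "\<lambda>c. comp_vec c = k" "k = (\<lambda>w. if w = 0 then q ^ (M - 1) - 1 else q ^ (M - 1))"]
  by (auto simp: comp_vec_0 comp_vec_nonzero)

lemma complete_weight_enumerator_even:
  assumes "even r"
  shows "real (card {c \<in> code_CQ e2 m2 Q. comp_vec c = k}) =
      (if k = (\<lambda>w. if w = 0 then q ^ M - 1 else 0) then 1 else 0)
    + real (q * (q ^ m2 - 1)) * (if k = (\<lambda>w. if w = 0 then q ^ (M - 1) - 1 else q ^ (M - 1)) then 1 else 0)
    + real (q - 1) *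
        (if real (k 0) = real q ^ (M - 1) * (1 + real_of_int eps * real q powr (- (real r / 2)) * (real q - 1)) - 1
            \<and> (\<forall>w. w \<noteq> 0 \<longrightarrow> real (k w) = real q ^ (M - 1) * (1 - real_of_int eps * real q powr (- (real r / 2))))
         then 1 else 0)"
    (is "_ = _ + _ + real (q - 1) * (if ?even_pattern then 1 else 0)")
proof -
  have "comp_vec (cw a 0) = k \<longleftrightarrow> ?even_pattern" if "a \<noteq> 0" for a
    unfolding comp_vec_eq_iff_real real_comp_vec_even[OF assms that] by (metis (full_types))
  then have "{a. a \<noteq> 0 \<and> comp_vec (cw a 0) = k} = (if ?even_pattern then UNIV - {0} else {})"
    by auto
  then have card_nonzero: "card {a. a \<noteq> 0 \<and> comp_vec (cw a 0) = k} = (q - 1) * of_bool ?even_pattern"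
    using q_def by (simp add: card_Diff_singleton)
  show ?thesis
    unfolding card_code_CQ_comp_vec card_nonzero of_nat_add of_nat_mult[of "q * (q ^ m2 - 1)"] of_nat_mult[of "q - 1"]
      of_nat_of_bool
    by (simp only: of_bool_def)
qed

lemma comp_vec_codeword_odd_0:
  assumes "odd r" "a \<noteq> 0"
  shows "comp_vec (cw a 0) 0 = q ^ (M - 1) - 1"
proof -
  have "real (comp_vec (cw a 0) 0) = real (q ^ (M - 1) - 1)"
    using real_comp_vec_odd[OF assms, of 0] q_ge_3 by simp
  then show ?thesis
    by (simp only: of_nat_eq_iff)
qed

lemma hwt_codeword_odd:
  assumes "odd r" "a \<noteq> 0 \<or> b \<noteq> 0"
  shows "hwt (cw a b) = q ^ (M - 1) * (q - 1)"
proof (cases "b = 0")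
  case True
  then show ?thesis
    using assms comp_vec_codeword_odd_0[OF assms(1)] by (simp add: hwt_codeword_if_comp_vec_0)
qed (rule hwt_codeword_nonzero)

lemma weight_distribution_odd:
  assumes "odd r"
  shows "card {c \<in> code_CQ e2 m2 Q. hwt c = w} =
    (if w = 0 then 1 else if w = q ^ (M - 1) * (q - 1) then q ^ (m2 + 1) - 1 else 0)"
proof -
  have "{a. a \<noteq> 0 \<and> hwt (cw a 0) = w} = (if w = q ^ (M - 1) * (q - 1) then UNIV - {0} else {})"
    using hwt_codeword_odd[OF assms] by auto
  then have "card {a. a \<noteq> 0 \<and> hwt (cw a 0) = w} = of_bool (w = q ^ (M - 1) * (q - 1)) * (q - 1)"
    using q_def by (simp add: card_Diff_singleton)
  moreover have "q * (q ^ m2 - 1) + (q - 1) = q ^ (m2 + 1) - 1"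
    using q_ge_3 by (simp add: diff_mult_distrib2)
  ultimately show ?thesis
    using card_code_CQ_filter[of "\<lambda>c. hwt c = w" "w = q ^ (M - 1) * (q - 1)"] hwt_codeword_nonzero q_ge_3
    by auto
qed

definition odd_rank_composition :: "int \<Rightarrow> ('a \<Rightarrow> nat) \<Rightarrow> bool" where
  "odd_rank_composition \<sigma> k \<longleftrightarrow> k 0 = q ^ (M - 1) - 1 \<and> (\<forall>w. w \<noteq> 0 \<longrightarrow> real (k w) = real q ^ (M - 1) *
     (1 + real_of_int \<sigma> * real_of_int eps * real q powr ((1 - real r) / 2) * real_of_int (eta (- w))))"

lemma comp_vec_codeword_odd_iff:
  assumes "odd r" "a \<noteq> 0"
  shows "comp_vec (cw a 0) = k \<longleftrightarrow> odd_rank_composition (eta a) k"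
proof -
  have "1 \<le> q ^ (M - 1)"
    using q_ge_3 by simp
  then have "real q ^ (M - 1) - 1 = real (q ^ (M - 1) - 1)"
    by simp
  then have "real (k 0) = real q ^ (M - 1) - 1 \<longleftrightarrow> k 0 = q ^ (M - 1) - 1"
    by (simp only: of_nat_eq_iff)
  then show ?thesis
    unfolding comp_vec_eq_iff_real real_comp_vec_odd[OF assms] odd_rank_composition_def
    by (auto simp: all_conj_distrib)
qed

lemma card_comp_vec_codeword_odd:
  assumes "odd r"
  shows "card {a. a \<noteq> 0 \<and> comp_vec (cw a 0) = k} =
    (q - 1) div 2 * of_bool (odd_rank_composition 1 k) + (q - 1) div 2 * of_bool (odd_rank_composition (-1) k)"
proof -
  have "{a. a \<noteq> 0 \<and> comp_vec (cw a 0) = k} =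
      {a. eta a = 1 \<and> odd_rank_composition 1 k} \<union> {a. eta a = -1 \<and> odd_rank_composition (-1) k}"
  proof (intro set_eqI)
    fix a :: 'a
    have "a \<noteq> 0 \<longleftrightarrow> eta a = 1 \<or> eta a = -1"
      using eta_cases[of a] eta_eq_0_iff[of a] by auto
    then show "a \<in> {a. a \<noteq> 0 \<and> comp_vec (cw a 0) = k} \<longleftrightarrow>
        a \<in> {a. eta a = 1 \<and> odd_rank_composition 1 k} \<union> {a. eta a = -1 \<and> odd_rank_composition (-1) k}"
      using comp_vec_codeword_odd_iff[OF assms, of a] by force
  qed
  then show ?thesis
    using card_eta_eq_1[OF odd_card_a] q_def by (simp add: card_Un_disjoint disjoint_iff)
qed

lemma complete_weight_enumerator_odd:
  assumes "odd r"
  shows "real (card {c \<in> code_CQ e2 m2 Q. comp_vec c = k}) =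
      (if k = (\<lambda>w. if w = 0 then q ^ M - 1 else 0) then 1 else 0)
    + real (q * (q ^ m2 - 1)) * (if k = (\<lambda>w. if w = 0 then q ^ (M - 1) - 1 else q ^ (M - 1)) then 1 else 0)
    + (real q - 1) / 2 *
        (if k 0 = q ^ (M - 1) - 1
            \<and> (\<forall>w. w \<noteq> 0 \<longrightarrow> real (k w) = real q ^ (M - 1) *
                   (1 + real_of_int eps * real q powr ((1 - real r) / 2) * real_of_int (eta (- w))))
         then 1 else 0)
    + (real q - 1) / 2 *
        (if k 0 = q ^ (M - 1) - 1
            \<and> (\<forall>w. w \<noteq> 0 \<longrightarrow> real (k w) = real q ^ (M - 1) *
                   (1 - real_of_int eps * real q powr ((1 - real r) / 2) * real_of_int (eta (- w))))
         then 1 else 0)"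
proof -
  have "real ((q - 1) div 2) = (real q - 1) / 2"
    using odd_card_a q_def q_ge_3 by (auto elim!: oddE)
  then show ?thesis
    unfolding card_code_CQ_comp_vec card_comp_vec_codeword_odd[OF assms] of_nat_add
      of_nat_mult[of "q * (q ^ m2 - 1)"] of_nat_mult[of "(q - 1) div 2"] of_nat_of_bool
    by (simp only: odd_rank_composition_def of_bool_def of_int_1 of_int_minus mult_1_left mult_minus_left
        add_uminus_conv_diff add.assoc)
qed

lemma hdist_codeword: "hdist (cw a b) (cw a' b') = hwt (cw (a - a') (b - b'))"
proof -
  have "cw (a - a') (b - b') z = cw a b z - cw a' b' z" for z
    by (simp flip: codeword_diff)
  then have "{z \<in> Fstar. cw a b z \<noteq> cw a' b' z} = {z \<in> Fstar. cw (a - a') (b - b') z \<noteq> 0}"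
    by auto
  then show ?thesis
    by (simp add: hdist_def hwt_def)
qed

lemma min_dist_odd:
  assumes "odd r"
  shows "min_dist (code_CQ e2 m2 Q) = q ^ (M - 1) * (q - 1)"
proof -
  have "{hdist c c' |c c'. c \<in> code_CQ e2 m2 Q \<and> c' \<in> code_CQ e2 m2 Q \<and> c \<noteq> c'} = {q ^ (M - 1) * (q - 1)}"
  proof (intro equalityI subsetI)
    fix d assume "d \<in> {hdist c c' |c c'. c \<in> code_CQ e2 m2 Q \<and> c' \<in> code_CQ e2 m2 Q \<and> c \<noteq> c'}"
    then obtain a b a' b' where "d = hdist (cw a b) (cw a' b')" "cw a b \<noteq> cw a' b'"
      by (auto simp: code_CQ_def)
    then show "d \<in> {q ^ (M - 1) * (q - 1)}"
      using hwt_codeword_odd[OF assms, of "a - a'" "b - b'"] by (auto simp: hdist_codeword codeword_eq_iff)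
  next
    fix d assume "d \<in> {q ^ (M - 1) * (q - 1)}"
    then have "d = hdist (cw 1 0) (cw 0 0)" "cw 1 0 \<noteq> cw 0 0"
      using hwt_codeword_odd[OF assms, of 1 0] by (simp_all add: hdist_codeword codeword_eq_iff)
    then show "d \<in> {hdist c c' |c c'. c \<in> code_CQ e2 m2 Q \<and> c' \<in> code_CQ e2 m2 Q \<and> c \<noteq> c'}"
      by (auto simp: code_CQ_def)
  qed
  then show ?thesis
    by (simp add: min_dist_def)
qed

lemma meets_griesmer_odd_iff:
  assumes "odd r"
  shows "meets_griesmer q (card (Fstar :: ('b \<times> 'c) set)) (m2 + 1) (min_dist (code_CQ e2 m2 Q))
    \<longleftrightarrow> m1 = 1 \<and> r = 1"
proof -
  have "(\<Sum>i<m2 + 1. \<lceil>real (q ^ (M - 1) * (q - 1)) / real q ^ i\<rceil>) = int q ^ M - int q ^ (m1 - 1)"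
    using sum_ceiling_geometric[where q = q and n = "M - 1" and k = "m2 + 1"] q_ge_3 M_def m1_pos
    by (simp add: Suc_diff_le)
  moreover have "int (q ^ M - 1) = int q ^ M - 1"
    using q_ge_3 by simp
  moreover have "int q ^ (m1 - 1) = 1 \<longleftrightarrow> m1 = 1"
    using q_ge_3 m1_pos by (auto simp flip: of_nat_power)
  ultimately show ?thesis
    using rank_le rank_pos by (auto simp: meets_griesmer_def card_Fstar min_dist_odd[OF assms])
qed

end

theorem theorem1:
  fixes p m m1 m2 M q r :: nat
    and e1 :: "'a::{finite,field} \<Rightarrow> 'b::{finite,field}"
    and e2 :: "'a \<Rightarrow> 'c::{finite,field}"
    and Q :: "'b \<Rightarrow> 'a"
    and C :: "('b \<times> 'c \<Rightarrow> 'a) set"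
    and \<epsilon> :: int
  assumes "prime p" and "odd p" and "m \<ge> 1"
    and "q = card (UNIV :: 'a set)" and "q = p ^ m"
    and "m1 \<ge> 1" and "m2 \<ge> 1" and "M = m1 + m2"
    and "is_emb e1" and "card (UNIV :: 'b set) = q ^ m1"
    and "is_emb e2" and "card (UNIV :: 'c set) = q ^ m2"
    and "is_qform e1 Q" and "Q \<noteq> (\<lambda>_. 0)"
    and "r = qf_rank m1 Q" and "r \<ge> 1"
    and "\<epsilon> = qf_eps p m e1 m1 Q"
    and "C = code_CQ e2 m2 Q"
  shows
   "(even r \<longrightarrow>
      card (Fstar :: ('b \<times> 'c) set) = q ^ M - 1 \<and> is_linear_code C \<and> card C = q ^ (m2 + 1) \<and>
      (\<forall>w::nat. card {c \<in> C. hwt c = w} =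
         (if w = 0 then 1
          else if w = q ^ (M - 1) * (q - 1) then q * (q ^ m2 - 1)
          else if real w = real q ^ (M - 1) * (real q - 1) * (1 - real_of_int \<epsilon> * real q powr (- (real r / 2)))
            then q - 1
          else 0)) \<and>
      (\<forall>k::'a \<Rightarrow> nat. real (card {c \<in> C. comp_vec c = k}) =
           (if k = (\<lambda>w. if w = 0 then q ^ M - 1 else 0) then 1 else 0)
         + real (q * (q ^ m2 - 1)) * (if k = (\<lambda>w. if w = 0 then q ^ (M - 1) - 1 else q ^ (M - 1)) then 1 else 0)
         + real (q - 1) *
             (if real (k 0) = real q ^ (M - 1) * (1 + real_of_int \<epsilon> * real q powr (- (real r / 2)) * (real q - 1)) - 1
                 \<and> (\<forall>w. w \<noteq> 0 \<longrightarrow> real (k w) = real q ^ (M - 1) * (1 - real_of_int \<epsilon> * real q powr (- (real r / 2))))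
              then 1 else 0)))
    \<and>
    (odd r \<longrightarrow>
      card (Fstar :: ('b \<times> 'c) set) = q ^ M - 1 \<and> is_linear_code C \<and> card C = q ^ (m2 + 1) \<and>
      (\<forall>w::nat. card {c \<in> C. hwt c = w} =
         (if w = 0 then 1
          else if w = q ^ (M - 1) * (q - 1) then q ^ (m2 + 1) - 1
          else 0)) \<and>
      (\<forall>k::'a \<Rightarrow> nat. real (card {c \<in> C. comp_vec c = k}) =
           (if k = (\<lambda>w. if w = 0 then q ^ M - 1 else 0) then 1 else 0)
         + real (q * (q ^ m2 - 1)) * (if k = (\<lambda>w. if w = 0 then q ^ (M - 1) - 1 else q ^ (M - 1)) then 1 else 0)
         + (real q - 1) / 2 *
             (if k 0 = q ^ (M - 1) - 1
                 \<and> (\<forall>w. w \<noteq> 0 \<longrightarrow> real (k w) = real q ^ (M - 1) *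
                        (1 + real_of_int \<epsilon> * real q powr ((1 - real r) / 2) * real_of_int (eta (- w))))
              then 1 else 0)
         + (real q - 1) / 2 *
             (if k 0 = q ^ (M - 1) - 1
                 \<and> (\<forall>w. w \<noteq> 0 \<longrightarrow> real (k w) = real q ^ (M - 1) *
                        (1 - real_of_int \<epsilon> * real q powr ((1 - real r) / 2) * real_of_int (eta (- w))))
              then 1 else 0)) \<and>
      (meets_griesmer q (card (Fstar :: ('b \<times> 'c) set)) (m2 + 1) (min_dist C) \<longleftrightarrow> m1 = 1 \<and> r = 1))"
proof -
  interpret quadratic_code p m m1 m2 M q e1 e2 Q
    using assms by unfold_locales auto
  show ?thesis
    unfolding assms(15,17,18)
    using card_Fstar is_linear_code_CQ card_code_CQ weight_distribution_even complete_weight_enumerator_even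
      weight_distribution_odd complete_weight_enumerator_odd meets_griesmer_odd_iff
    by blast
qed

end
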